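(* Let $X=\ell_p$ for some $1\le p<\infty$, or $X=c_0$, considered as a Banach algebra under coordinatewise multiplication. Let $\mathcal A$ be a finitely invariant Furstenberg family and $\lambda\in\mathbb C$ with $|\lambda|>1$. Then $\lambda B$ admits an algebra of $\mathcal A$-hypercyclic vectors, except zero (i.e. there is a subalgebra $\mathcal B\ne\{0\}$ of $X$ all of whose non-zero elements are $\mathcal A$-hypercyclic for $\lambda B$), if and only if there exists a family $(A(l,m))_{l,m\ge1}$ of pairwise disjoint sets in $\mathcal A$ such that, for any $l,m,l',m'\ge1$ and any $n\in A(l,m)$, $n'\in A(l',m')$ with $n'>n$, we have $n'\ge n+l$ and $n'\frac{m}{m'}\ge n+l+l'$.
   Context: $\lambda B(x(1),x(2),x(3),\ldots)=(\lambda x(2),\lambda x(3),\ldots)$. A Furstenberg family is a non-empty family $\mathcal A$ of subsets of $\mathbb N_0$ with $\varnothing\notin\mathcal A$ and such that $A\in\mathcal A$, $A\subset B\subset\mathbb N_0$ imply $B\in\mathcal A$; it is finitely invariant if $A\in\mathcal A$ implies $A\setminus[0,N]\in\mathcal A$ for all $N\ge0$. A vector $x$ is $\mathcal A$-hypercyclic for an operator $T$ if for every non-empty open $U\subset X$, $\{n\ge0:T^nx\in U\}\in\mathcal A$. *)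

theory Defs
  imports "HOL-Analysis.Analysis"
begin

text \<open>Sequences are indexed from 0: x(1),x(2),... of the paper becomes x 0, x 1, ...\<close>

datatype seqspace = LP real | C0

definition seq_carrier :: "seqspace \<Rightarrow> (nat \<Rightarrow> complex) set" where
  "seq_carrier S = (case S of
      LP p \<Rightarrow> {x. summable (\<lambda>k. norm (x k) powr p)}
    | C0 \<Rightarrow> {x. x \<longlonglongrightarrow> 0})"

definition seq_norm :: "seqspace \<Rightarrow> (nat \<Rightarrow> complex) \<Rightarrow> real" where
  "seq_norm S x = (case S of
      LP p \<Rightarrow> (\<Sum>k. norm (x k) powr p) powr (1 / p)
    | C0 \<Rightarrow> (SUP k. norm (x k)))"

definition admissible_space :: "seqspace \<Rightarrow> bool" where
  "admissible_space S = (case S of LP p \<Rightarrow> 1 \<le> p | C0 \<Rightarrow> True)"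

definition seq_open :: "seqspace \<Rightarrow> (nat \<Rightarrow> complex) set \<Rightarrow> bool" where
  "seq_open S U = (U \<subseteq> seq_carrier S \<and>
     (\<forall>u\<in>U. \<exists>e>0. \<forall>v\<in>seq_carrier S. seq_norm S (\<lambda>k. v k - u k) < e \<longrightarrow> v \<in> U))"

definition wshift :: "complex \<Rightarrow> (nat \<Rightarrow> complex) \<Rightarrow> (nat \<Rightarrow> complex)" where
  "wshift lam x = (\<lambda>k. lam * x (Suc k))"

definition furstenberg_family :: "nat set set \<Rightarrow> bool" where
  "furstenberg_family F = (F \<noteq> {} \<and> {} \<notin> F \<and>
     (\<forall>A B. A \<in> F \<and> A \<subseteq> B \<longrightarrow> B \<in> F))"

definition finitely_invariant :: "nat set set \<Rightarrow> bool" where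
  "finitely_invariant F = (\<forall>A\<in>F. \<forall>N. A - {0..N} \<in> F)"

definition A_hypercyclic ::
  "seqspace \<Rightarrow> nat set set \<Rightarrow> ((nat \<Rightarrow> complex) \<Rightarrow> (nat \<Rightarrow> complex)) \<Rightarrow> (nat \<Rightarrow> complex) \<Rightarrow> bool" where
  "A_hypercyclic S F T x = (x \<in> seq_carrier S \<and>
     (\<forall>U. seq_open S U \<and> U \<noteq> {} \<longrightarrow> {n. (T ^^ n) x \<in> U} \<in> F))"

definition seq_subalgebra :: "seqspace \<Rightarrow> (nat \<Rightarrow> complex) set \<Rightarrow> bool" where
  "seq_subalgebra S B = (B \<subseteq> seq_carrier S \<and> (\<lambda>k. 0) \<in> B \<and>
     (\<forall>x\<in>B. \<forall>y\<in>B. (\<lambda>k. x k + y k) \<in> B \<and> (\<lambda>k. x k * y k) \<in> B) \<and>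
     (\<forall>c::complex. \<forall>x\<in>B. (\<lambda>k. c * x k) \<in> B))"

end

(*
  Necessity: if u is a nonzero element of the algebra, every power u^m is A-hypercyclic, so for
  every (l, m) the times n at which |lam|^n |u(n + k)|^m is close to a target profile with a
  distinctive pattern of peaks of height about |lam|^(l m) form a set A(l, m) in the family.
  Comparing neighbouring coordinates shows that two profiles cannot be matched at the same time,
  nor at two times closer than the width of the first pattern; comparing the peak of the later
  profile with the small values of the earlier one gives n' m / m' >= n + l + l'.

  Sufficiency: u is built block by block. On a block starting at n in A(L, m), with n large, the
  coordinates of u are m-th roots of t_i / lam^n, where (t_i) is the L-th list of an enumeration
  of lists of Gaussian rationals. The algebra consists of the p(u) with p(0) = 0. If a z^m is the
  lowest term of p, then lam^n p(u) is close to a t on that block, since the higher terms carry an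
  extra factor of the tiny u, while the separation conditions make the remaining coordinates
  geometrically small in l^1, which controls both the l^p and the c_0 norm.
*)
theory Submission
  imports Defs
begin

section \<open>Sequence spaces\<close>

lemma funpow_wshift: "(wshift lam ^^ n) x = (\<lambda>k. lam ^ n * x (n + k))"
  by (induction n arbitrary: x) (auto simp: wshift_def mult.assoc)

lemma powr_add_le_two_powr:
  fixes a b p :: real
  assumes "0 \<le> a" "0 \<le> b" "0 < p"
  shows "(a + b) powr p \<le> 2 powr p * (a powr p + b powr p)"
proof -
  have "(a + b) powr p \<le> (2 * max a b) powr p"
    by (rule powr_mono2) (use assms in auto)
  also have "\<dots> = 2 powr p * max a b powr p"
    using assms by (simp add: powr_mult)
  also have "max a b powr p \<le> a powr p + b powr p"
    by (auto simp: max_def)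
  hence "2 powr p * max a b powr p \<le> 2 powr p * (a powr p + b powr p)"
    by (intro mult_left_mono) auto
  finally show ?thesis .
qed

lemma norm_diff_powr_le:
  fixes x y :: complex and p :: real
  assumes "0 < p"
  shows "norm (x - y) powr p \<le> 2 powr p * (norm x powr p + norm y powr p)"
proof -
  have "norm (x - y) powr p \<le> (norm x + norm y) powr p"
    by (rule powr_mono2) (use assms norm_triangle_ineq4 in auto)
  also have "\<dots> \<le> 2 powr p * (norm x powr p + norm y powr p)"
    by (rule powr_add_le_two_powr) (use assms in auto)
  finally show ?thesis .
qed

lemma seq_carrier_diff:
  assumes "admissible_space S" "x \<in> seq_carrier S" "y \<in> seq_carrier S"
  shows "(\<lambda>k. x k - y k) \<in> seq_carrier S"
proof (cases S)
  case (LP p)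
  then have p: "0 < p" and sx: "summable (\<lambda>k. norm (x k) powr p)"
    and sy: "summable (\<lambda>k. norm (y k) powr p)"
    using assms by (auto simp: seq_carrier_def admissible_space_def)
  have "summable (\<lambda>k. norm (x k - y k) powr p)"
    by (rule summable_comparison_test'[OF summable_mult[OF summable_add[OF sx sy]]])
       (use norm_diff_powr_le[OF p] in simp)
  then show ?thesis using LP by (simp add: seq_carrier_def)
next
  case C0
  then show ?thesis using assms tendsto_diff[of x 0 sequentially y 0]
    by (auto simp: seq_carrier_def)
qed

lemma seq_carrier_norm_tendsto_zero:
  assumes "admissible_space S" "x \<in> seq_carrier S"
  shows "(\<lambda>k. norm (x k)) \<longlonglongrightarrow> 0"
proof (cases S)
  case (LP p)
  hence p: "1 \<le> p" and sm: "summable (\<lambda>k. norm (x k) powr p)"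
    using assms by (auto simp: seq_carrier_def admissible_space_def)
  have "(\<lambda>k. (norm (x k) powr p) powr (1/p)) \<longlonglongrightarrow> 0 powr (1/p)"
    by (rule tendsto_powr'[OF summable_LIMSEQ_zero[OF sm]]) (use p in auto)
  then show ?thesis using p by (simp add: powr_powr)
next
  case C0
  then show ?thesis using assms tendsto_norm_zero[of x sequentially]
    by (auto simp: seq_carrier_def)
qed

lemma norm_le_seq_norm:
  assumes "admissible_space S" "x \<in> seq_carrier S"
  shows "norm (x k) \<le> seq_norm S x"
proof (cases S)
  case (LP p)
  hence p: "1 \<le> p" and sm: "summable (\<lambda>k. norm (x k) powr p)"
    using assms by (auto simp: seq_carrier_def admissible_space_def)
  have "norm (x k) powr p \<le> (\<Sum>k. norm (x k) powr p)"
    using sum_le_suminf[OF sm, of "{k}"] by auto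
  hence "(norm (x k) powr p) powr (1/p) \<le> (\<Sum>k. norm (x k) powr p) powr (1/p)"
    using p by (intro powr_mono2) auto
  then show ?thesis using p LP by (simp add: powr_powr seq_norm_def)
next
  case C0
  have "Bseq (\<lambda>k. norm (x k))"
    using seq_carrier_norm_tendsto_zero[OF assms] by (intro convergent_imp_Bseq convergentI)
  hence "bdd_above (range (\<lambda>k. norm (x k)))"
    by (auto simp: Bseq_def intro: bdd_aboveI2)
  then show ?thesis using C0 unfolding seq_norm_def by (auto intro: cSUP_upper)
qed

lemma seq_carrier_finite_support:
  assumes "\<And>k. k \<ge> K \<Longrightarrow> x k = 0"
  shows "x \<in> seq_carrier S"
proof (cases S)
  case (LP p)
  have "summable (\<lambda>k. norm (x k) powr p)"
    by (rule summable_finite[of "{..<K}"]) (use assms in auto)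
  then show ?thesis using LP by (simp add: seq_carrier_def)
next
  case C0
  have "eventually (\<lambda>k. x k = 0) sequentially"
    using assms by (auto simp: eventually_sequentially)
  hence "x \<longlonglongrightarrow> 0" by (rule tendsto_eventually)
  then show ?thesis using C0 by (simp add: seq_carrier_def)
qed

lemma seq_carrier_if_summable_norm:
  assumes "admissible_space S" "summable (\<lambda>k. norm (x k))"
  shows "x \<in> seq_carrier S"
proof (cases S)
  case (LP p)
  hence p: "1 \<le> p" using assms by (auto simp: admissible_space_def)
  have "eventually (\<lambda>k. norm (x k) < 1) sequentially"
    by (rule order_tendstoD(2)[OF summable_LIMSEQ_zero[OF assms(2)]]) simp
  hence "eventually (\<lambda>k. norm (norm (x k) powr p) \<le> norm (x k)) sequentially"
  proof eventually_elim
    case (elim k)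
    have "norm (x k) powr p \<le> norm (x k) powr 1"
      by (rule powr_mono') (use elim p in auto)
    then show ?case by simp
  qed
  hence "summable (\<lambda>k. norm (x k) powr p)"
    by (rule summable_comparison_test_ev[OF _ assms(2)])
  then show ?thesis using LP by (simp add: seq_carrier_def)
next
  case C0
  have "x \<longlonglongrightarrow> 0"
    using summable_LIMSEQ_zero[OF assms(2)] by (simp add: tendsto_norm_zero_iff)
  then show ?thesis using C0 by (simp add: seq_carrier_def)
qed

lemma summable_norm_scaled_shift:
  fixes x :: "nat \<Rightarrow> complex"
  assumes "summable (\<lambda>k. norm (x k))"
  shows "summable (\<lambda>k. norm (a * x (n + k)))"
proof -
  have "summable (\<lambda>k. norm (x (k + n)))" using assms by (subst summable_iff_shift)
  hence "summable (\<lambda>k. norm a * norm (x (k + n)))" by (rule summable_mult)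
  then show ?thesis by (simp add: norm_mult add.commute)
qed

lemma seq_open_coordinate_box:
  assumes adm: "admissible_space S" and y: "y \<in> seq_carrier S" and e: "0 < e"
  shows "seq_open S {x \<in> seq_carrier S. \<forall>k. norm (x k - y k) < e}"
  unfolding seq_open_def
proof (intro conjI ballI)
  fix x assume "x \<in> {x \<in> seq_carrier S. \<forall>k. norm (x k - y k) < e}"
  hence x: "x \<in> seq_carrier S" and xy: "\<And>k. norm (x k - y k) < e" by auto
  \<comment> \<open>x - y tends to 0, so only the finitely many coordinates below some K restrict the radius\<close>
  have "eventually (\<lambda>k. norm (x k - y k) < e / 2) sequentially"
    using e by (intro order_tendstoD(2)[OF seq_carrier_norm_tendsto_zero[OF adm seq_carrier_diff[OF adm x y]]]) auto
  then obtain K where K: "\<And>k. k \<ge> K \<Longrightarrow> norm (x k - y k) < e / 2"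
    by (auto simp: eventually_sequentially)
  define E where "E = insert (e / 2) ((\<lambda>k. e - norm (x k - y k)) ` {..<K})"
  define d where "d = Min E"
  have "finite E" by (simp add: E_def)
  have d0: "0 < d" unfolding d_def using \<open>finite E\<close> xy e by (auto simp: E_def)
  have d1: "d \<le> e / 2" unfolding d_def by (rule Min_le) (use \<open>finite E\<close> in \<open>auto simp: E_def\<close>)
  have d2: "\<And>k. k < K \<Longrightarrow> d \<le> e - norm (x k - y k)"
    unfolding d_def by (rule Min_le) (use \<open>finite E\<close> in \<open>auto simp: E_def\<close>)
  have "v \<in> {x \<in> seq_carrier S. \<forall>k. norm (x k - y k) < e}"
    if v: "v \<in> seq_carrier S" and vx: "seq_norm S (\<lambda>k. v k - x k) < d" for v
  proof -
    have "norm (v k - y k) < e" for k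
    proof -
      have "norm (v k - x k) < d"
        using norm_le_seq_norm[OF adm seq_carrier_diff[OF adm v x], of k] vx by simp
      moreover have "norm (v k - y k) \<le> norm (v k - x k) + norm (x k - y k)"
        using norm_triangle_ineq[of "v k - x k" "x k - y k"] by simp
      ultimately show ?thesis using d1 d2[of k] K[of k] by (cases "k < K") auto
    qed
    then show ?thesis using v by simp
  qed
  then show "\<exists>d>0. \<forall>v\<in>seq_carrier S. seq_norm S (\<lambda>k. v k - x k) < d \<longrightarrow>
          v \<in> {x \<in> seq_carrier S. \<forall>k. norm (x k - y k) < e}"
    using d0 by blast
qed auto

text \<open>
  The tail is bounded in l^1 through its finite partial sums, so that no summability is presupposed;
  such a bound controls the tail in every admissible norm.
\<close>
definition head_tail_close :: "nat \<Rightarrow> real \<Rightarrow> (nat \<Rightarrow> complex) \<Rightarrow> (nat \<Rightarrow> complex) \<Rightarrow> bool" where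
  "head_tail_close w \<delta> x v \<longleftrightarrow> (\<forall>k<w. norm (x k - v k) \<le> \<delta>) \<and>
     (\<forall>K. finite K \<longrightarrow> K \<subseteq> {w..} \<longrightarrow> (\<Sum>k\<in>K. norm (x k)) \<le> \<delta>)"

lemma head_tail_close_partial_sum_le:
  assumes p: "1 \<le> p" and \<delta>: "\<delta> \<le> 1" and close: "head_tail_close w \<delta> x v"
  shows "(\<Sum>k<N. norm (x k - v k) powr p)
           \<le> real w * \<delta> + 2 powr p * (\<delta> + (\<Sum>k\<in>{w..<max N w}. norm (v k) powr p))"
proof -
  define f where "f k = norm (x k - v k) powr p" for k
  define M where "M = max N w"
  have head: "f k \<le> \<delta>" if "k < w" for k
  proof -
    have "norm (x k - v k) \<le> \<delta>" using close that by (simp add: head_tail_close_def)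
    then have "f k \<le> \<delta> powr p" unfolding f_def using p by (intro powr_mono2) auto
    also have "\<dots> \<le> \<delta> powr 1"
      using \<delta> p \<open>norm (x k - v k) \<le> \<delta>\<close> norm_ge_zero[of "x k - v k"] by (intro powr_mono') linarith+
    finally show ?thesis using \<open>norm (x k - v k) \<le> \<delta>\<close> norm_ge_zero[of "x k - v k"] by simp
  qed
  have tail_sum: "(\<Sum>k\<in>K. norm (x k)) \<le> \<delta>" if "finite K" "K \<subseteq> {w..}" for K
    using close that by (simp add: head_tail_close_def)
  have tail: "f k \<le> 2 powr p * (norm (x k) + norm (v k) powr p)" if "w \<le> k" for k
  proof -
    have "norm (x k) \<le> 1" using tail_sum[of "{k}"] that \<delta> by simp
    then have "norm (x k) powr p \<le> norm (x k) powr 1" using p by (intro powr_mono') auto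
    then show ?thesis
      using norm_diff_powr_le[of p "x k" "v k"] p unfolding f_def by (simp add: mult_left_mono order_trans)
  qed
  have "sum f {..<N} \<le> sum f {..<M}" by (rule sum_mono2) (auto simp: M_def f_def)
  also have "{..<M} = {..<w} \<union> {w..<M}" by (auto simp: M_def)
  also have "sum f \<dots> = sum f {..<w} + sum f {w..<M}" by (rule sum.union_disjoint) auto
  also have "sum f {..<w} \<le> (\<Sum>k<w. \<delta>)" by (rule sum_mono) (use head in auto)
  also have "sum f {w..<M} \<le> (\<Sum>k\<in>{w..<M}. 2 powr p * (norm (x k) + norm (v k) powr p))"
    by (rule sum_mono) (use tail in auto)
  also have "\<dots> = 2 powr p * ((\<Sum>k\<in>{w..<M}. norm (x k)) + (\<Sum>k\<in>{w..<M}. norm (v k) powr p))"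
    by (simp add: sum.distrib sum_distrib_left distrib_left)
  also have "\<dots> \<le> 2 powr p * (\<delta> + (\<Sum>k\<in>{w..<M}. norm (v k) powr p))"
    using tail_sum[of "{w..<M}"] by (intro mult_left_mono) (auto simp: subset_eq)
  finally show ?thesis by (simp add: M_def f_def)
qed

lemma lp_norm_diff_less_if_head_tail_close:
  assumes p: "1 \<le> p" and v: "summable (\<lambda>k. norm (v k) powr p)" and e: "0 < e"
  shows "\<exists>w \<delta>. 0 < \<delta> \<and> \<delta> \<le> 1 \<and> (\<forall>x. summable (\<lambda>k. norm (x k - v k) powr p) \<longrightarrow>
            head_tail_close w \<delta> x v \<longrightarrow> (\<Sum>k. norm (x k - v k) powr p) powr (1 / p) < e)"
proof -
  define ep where "ep = e powr p"
  have ep0: "0 < ep" using e by (simp add: ep_def)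
  define \<tau> where "\<tau> = ep / (4 * 2 powr p)"
  have \<tau>_eq: "2 powr p * \<tau> = ep / 4" by (simp add: \<tau>_def)
  have "0 < \<tau>" using ep0 by (simp add: \<tau>_def)
  then obtain w where "\<forall>N. norm (\<Sum>k\<in>{w..<N}. norm (v k) powr p) < \<tau>"
    using v unfolding summable_Cauchy by blast
  then have w: "\<And>N. (\<Sum>k\<in>{w..<N}. norm (v k) powr p) < \<tau>"
    by (simp add: abs_less_iff)
  define \<delta> where "\<delta> = min 1 (ep / (4 * (real w + 2 powr p)))"
  have wp: "0 < real w + 2 powr p" by (simp add: add_nonneg_pos)
  have \<delta>0: "0 < \<delta>" and \<delta>1: "\<delta> \<le> 1" using ep0 wp by (auto simp: \<delta>_def)
  have "(real w + 2 powr p) * \<delta> \<le> (real w + 2 powr p) * (ep / (4 * (real w + 2 powr p)))"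
    using wp by (intro mult_left_mono) (auto simp: \<delta>_def)
  also have "\<dots> = ep / 4" using wp by (simp add: field_simps)
  finally have \<delta>2: "(real w + 2 powr p) * \<delta> \<le> ep / 4" .
  have "(\<Sum>k. norm (x k - v k) powr p) powr (1 / p) < e"
    if sx: "summable (\<lambda>k. norm (x k - v k) powr p)" and close: "head_tail_close w \<delta> x v" for x
  proof -
    have partial: "(\<Sum>k<N. norm (x k - v k) powr p) \<le> 3 * ep / 4" for N
    proof -
      have "(\<Sum>k<N. norm (x k - v k) powr p)
              \<le> real w * \<delta> + 2 powr p * (\<delta> + (\<Sum>k\<in>{w..<max N w}. norm (v k) powr p))"
        by (rule head_tail_close_partial_sum_le[OF p \<delta>1 close])
      also have "\<dots> \<le> (real w + 2 powr p) * \<delta> + 2 powr p * \<tau>"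
        using w[of "max N w"] by (simp add: algebra_simps)
      also have "\<dots> \<le> 3 * ep / 4" using \<delta>2 \<tau>_eq ep0 by linarith
      finally show ?thesis .
    qed
    have "(\<Sum>k. norm (x k - v k) powr p) < ep"
      using suminf_le_const[OF sx partial] ep0 by linarith
    hence "(\<Sum>k. norm (x k - v k) powr p) powr (1 / p) < ep powr (1 / p)"
      using p sx by (intro powr_less_mono2) (auto intro: suminf_nonneg)
    also have "ep powr (1 / p) = e" using p e by (simp add: ep_def powr_powr)
    finally show ?thesis .
  qed
  then show ?thesis using \<delta>0 \<delta>1 by blast
qed

lemma seq_norm_diff_less_if_head_tail_close:
  assumes adm: "admissible_space S" and v: "v \<in> seq_carrier S" and e: "0 < e"
  shows "\<exists>w \<delta>. 0 < \<delta> \<and> \<delta> \<le> 1 \<and> (\<forall>x\<in>seq_carrier S.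
            head_tail_close w \<delta> x v \<longrightarrow> seq_norm S (\<lambda>k. x k - v k) < e)"
proof (cases S)
  case (LP p)
  have p: "1 \<le> p" and sv: "summable (\<lambda>k. norm (v k) powr p)"
    using adm v LP by (auto simp: admissible_space_def seq_carrier_def)
  have "summable (\<lambda>k. norm (x k - v k) powr p)" if "x \<in> seq_carrier S" for x
    using seq_carrier_diff[OF adm that v] LP by (simp add: seq_carrier_def)
  then show ?thesis
    using lp_norm_diff_less_if_head_tail_close[OF p sv e] LP by (fastforce simp: seq_norm_def)
next
  case C0
  have "eventually (\<lambda>k. norm (v k) < e / 4) sequentially"
    using e by (intro order_tendstoD(2)[OF seq_carrier_norm_tendsto_zero[OF adm v]]) auto
  then obtain w where w: "\<And>k. k \<ge> w \<Longrightarrow> norm (v k) < e / 4"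
    by (auto simp: eventually_sequentially)
  define \<delta> where "\<delta> = min 1 (e / 4)"
  have "seq_norm S (\<lambda>k. x k - v k) < e" if close: "head_tail_close w \<delta> x v" for x
  proof -
    have "norm (x k - v k) \<le> e / 2" for k
    proof (cases "k < w")
      case True then show ?thesis using close e by (force simp: head_tail_close_def \<delta>_def)
    next
      case False
      have "norm (x k) \<le> \<delta>" using close False by (force simp: head_tail_close_def dest: spec[of _ "{k}"])
      moreover have "norm (x k - v k) \<le> norm (x k) + norm (v k)" by (rule norm_triangle_ineq4)
      ultimately show ?thesis using w[of k] False by (auto simp: \<delta>_def)
    qed
    hence "(SUP k. norm (x k - v k)) \<le> e / 2" by (intro cSUP_least) auto
    then show ?thesis using C0 e by (simp add: seq_norm_def)
  qed
  then show ?thesis using e by (intro exI[of _ w] exI[of _ \<delta>]) (auto simp: \<delta>_def)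
qed

section \<open>Return times of the powers of a hypercyclic vector\<close>

definition separated_return_family :: "nat set set \<Rightarrow> (nat \<Rightarrow> nat \<Rightarrow> nat set) \<Rightarrow> bool" where
  "separated_return_family F A \<longleftrightarrow>
     (\<forall>l m. 1 \<le> l \<and> 1 \<le> m \<longrightarrow> A l m \<in> F) \<and>
     (\<forall>l m l' m'. 1 \<le> l \<and> 1 \<le> m \<and> 1 \<le> l' \<and> 1 \<le> m' \<and> (l, m) \<noteq> (l', m')
         \<longrightarrow> A l m \<inter> A l' m' = {}) \<and>
     (\<forall>l m l' m' n n'. 1 \<le> l \<and> 1 \<le> m \<and> 1 \<le> l' \<and> 1 \<le> m' \<and>
         n \<in> A l m \<and> n' \<in> A l' m' \<and> n < n' \<longrightarrow>
         n + l \<le> n' \<and> real n + real l + real l' \<le> real n' * real m / real m')"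

definition hypercyclic_subalgebra ::
  "seqspace \<Rightarrow> nat set set \<Rightarrow> ((nat \<Rightarrow> complex) \<Rightarrow> (nat \<Rightarrow> complex)) \<Rightarrow> (nat \<Rightarrow> complex) set \<Rightarrow> bool" where
  "hypercyclic_subalgebra S F T B \<longleftrightarrow> seq_subalgebra S B \<and> B \<noteq> {\<lambda>k. 0} \<and>
     (\<forall>x\<in>B. x \<noteq> (\<lambda>k. 0) \<longrightarrow> A_hypercyclic S F T x)"

lemma seq_subalgebra_power:
  assumes "seq_subalgebra S B" "x \<in> B" "1 \<le> m"
  shows "(\<lambda>k. x k ^ m) \<in> B"
  using assms(3)
proof (induction m rule: dec_induct)
  case (step m)
  then have "(\<lambda>k. x k * x k ^ m) \<in> B" using assms(1,2) by (simp add: seq_subalgebra_def)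
  then show ?case by simp
qed (use assms(2) in simp)

lemma A_hypercyclic_returns_to_box:
  assumes adm: "admissible_space S" and fam: "furstenberg_family F"
    and hc: "A_hypercyclic S F T x" and y: "y \<in> seq_carrier S" and e: "0 < e"
  shows "{n. \<forall>k. norm ((T ^^ n) x k - y k) < e} \<in> F"
proof -
  define U where "U = {z \<in> seq_carrier S. \<forall>k. norm (z k - y k) < e}"
  have "seq_open S U" unfolding U_def by (rule seq_open_coordinate_box[OF adm y e])
  moreover have "y \<in> U" using y e by (simp add: U_def)
  ultimately have "{n. (T ^^ n) x \<in> U} \<in> F" using hc by (auto simp: A_hypercyclic_def)
  moreover have "{n. (T ^^ n) x \<in> U} \<subseteq> {n. \<forall>k. norm ((T ^^ n) x k - y k) < e}"
    by (auto simp: U_def)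
  ultimately show ?thesis using fam by (auto simp: furstenberg_family_def)
qed

lemma le_double_if_power_less_double:
  fixes a b :: real
  assumes "a ^ m < 2 * b ^ m" "0 \<le> b" "1 \<le> m"
  shows "a \<le> 2 * b"
proof (rule ccontr)
  assume "\<not> a \<le> 2 * b"
  then have "(2 * b) ^ m < a ^ m" by (intro power_strict_mono) (use assms in auto)
  moreover have "2 * b ^ m \<le> 2 ^ m * b ^ m"
    using assms(2,3) by (intro mult_right_mono) (auto simp: self_le_power)
  ultimately show False using assms(1) by (simp add: power_mult_distrib)
qed

text \<open>
  For every (l, m) the shifted m-th power of a nonzero element of the algebra returns close to a
  target profile that is large (about \<open>c ^ (l * m)\<close>) at position 0 and at the odd positions below
  \<open>target_width l m\<close>, and small elsewhere. The widths are even and pairwise distinct, so two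
  profiles cannot be matched at the same time, and a profile cannot be matched again before its
  whole window has passed.
\<close>

definition target_width :: "nat \<Rightarrow> nat \<Rightarrow> nat" where
  "target_width l m = 2 * prod_encode (l, m) + 2"

definition target_peak :: "nat \<Rightarrow> nat \<Rightarrow> nat \<Rightarrow> bool" where
  "target_peak l m k \<longleftrightarrow> k = 0 \<or> (odd k \<and> k < target_width l m)"

lemma even_target_width: "even (target_width l m)"
  by (simp add: target_width_def)

lemma target_width_ge: "2 * l + 2 \<le> target_width l m"
  using le_prod_encode_1[of l m] by (simp add: target_width_def)

lemma target_width_inject: "target_width l m = target_width l' m' \<longleftrightarrow> (l, m) = (l', m')"
  by (auto simp: target_width_def)

locale target_matching =
  fixes c :: real and g :: "nat \<Rightarrow> real"
  assumes base_gt_one: "1 < c" and g_nonneg: "\<And>j. 0 \<le> g j"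
begin

definition height :: "nat \<Rightarrow> nat \<Rightarrow> real" where
  "height l m = c ^ (l * m) + 1"

definition tolerance :: "nat \<Rightarrow> nat \<Rightarrow> real" where
  "tolerance l m = 1 / (2 ^ (m + 1) * c ^ l)"

definition target :: "nat \<Rightarrow> nat \<Rightarrow> nat \<Rightarrow> real" where
  "target l m k = (if target_peak l m k then height l m else 0)"

definition near_target :: "nat \<Rightarrow> nat \<Rightarrow> nat \<Rightarrow> bool" where
  "near_target l m n \<longleftrightarrow> (\<forall>k. \<bar>c ^ n * g (n + k) ^ m - target l m k\<bar> < tolerance l m)"

lemma tolerance_pos: "0 < tolerance l m"
  using base_gt_one by (simp add: tolerance_def)

lemma tolerance_mult_le: "tolerance l m * c ^ l \<le> 1"
proof -
  have "tolerance l m * c ^ l = 1 / 2 ^ (m + 1)"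
    using base_gt_one by (simp add: tolerance_def field_simps)
  also have "\<dots> \<le> 1" using one_le_power[of "2::real" "m + 1"] by simp
  finally show ?thesis .
qed

lemma two_power_tolerance_le: "2 ^ m * tolerance l m \<le> 1 / 2"
proof -
  have "2 ^ m * tolerance l m = 1 / (2 * c ^ l)"
    by (simp add: tolerance_def field_simps)
  also have "\<dots> \<le> 1 / 2" using base_gt_one by (simp add: field_simps)
  finally show ?thesis .
qed

lemma tolerance_le_half: "tolerance l m \<le> 1 / 2"
proof -
  have "tolerance l m \<le> 2 ^ m * tolerance l m"
    using tolerance_pos[of l m] one_le_power[of "2::real" m] by simp
  then show ?thesis using two_power_tolerance_le[of m l] by linarith
qed

lemma power_le_height_minus_tolerance: "c ^ (l * m) \<le> height l m - tolerance l m"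
  using tolerance_le_half[of l m] by (simp add: height_def)

lemma height_ge_one: "1 \<le> c ^ (l * m)"
  using base_gt_one by simp

lemma near_target_peak:
  assumes "near_target l m n" "target_peak l m k"
  shows "height l m - tolerance l m < c ^ n * g (n + k) ^ m"
    and "c ^ n * g (n + k) ^ m < height l m + tolerance l m"
  using assms unfolding near_target_def target_def by (auto simp: abs_less_iff dest: spec[of _ k])

lemma near_target_off_peak:
  assumes "near_target l m n" "\<not> target_peak l m k"
  shows "c ^ n * g (n + k) ^ m < tolerance l m"
  using assms unfolding near_target_def target_def by (auto simp: abs_less_iff dest: spec[of _ k])

lemma near_target_dominates:
  assumes "near_target l m n" "target_peak l m j" "\<not> target_peak l m j'"
  shows "2 * g (n + j') < g (n + j)"
proof -
  have "c ^ n * (2 * g (n + j')) ^ m = 2 ^ m * (c ^ n * g (n + j') ^ m)"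
    by (simp add: power_mult_distrib)
  also have "\<dots> < 2 ^ m * tolerance l m"
    using near_target_off_peak[OF assms(1,3)] by simp
  also have "\<dots> < c ^ n * g (n + j) ^ m"
    using two_power_tolerance_le[of m l] tolerance_le_half[of l m] height_ge_one[of l m]
      near_target_peak(1)[OF assms(1,2)]
    unfolding height_def by linarith
  finally have "(2 * g (n + j')) ^ m < g (n + j) ^ m"
    using base_gt_one by simp
  then show ?thesis using g_nonneg power_less_imp_less_base by blast
qed

lemma near_target_comparable:
  assumes "near_target l m n" "target_peak l m j" "target_peak l m j'"
  shows "g (n + j) ^ m < 2 * g (n + j') ^ m"
proof -
  have "3 * tolerance l m \<le> height l m"
    using tolerance_le_half[of l m] height_ge_one[of l m] by (simp add: height_def)
  then have "c ^ n * g (n + j) ^ m < c ^ n * (2 * g (n + j') ^ m)"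
    using near_target_peak(2)[OF assms(1,2)] near_target_peak(1)[OF assms(1,3)] by linarith
  then show ?thesis using base_gt_one by simp
qed

lemma near_target_same_time:
  assumes "near_target l m n" "near_target l' m' n" "1 \<le> m" "1 \<le> m'"
  shows "(l, m) = (l', m')"
proof -
  have False if near: "near_target l m n" "near_target l' m' n" and "1 \<le> m'"
    and lt: "target_width l m < target_width l' m'" for l m l' m'
  proof -
    \<comment> \<open>the first position after the shorter window is a peak only of the longer profile\<close>
    define k where "k = target_width l m + 1"
    have "k < target_width l' m'"
      using lt even_target_width[of l m] even_target_width[of l' m'] unfolding k_def
      by (auto elim!: evenE)
    then have peak': "target_peak l' m' k" and off: "\<not> target_peak l m k"
      using even_target_width[of l m] by (auto simp: target_peak_def k_def)
    have peak0: "target_peak l m 0" "target_peak l' m' 0" by (simp_all add: target_peak_def)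
    have "2 * g (n + k) < g (n + 0)" and "g (n + 0) ^ m' < 2 * g (n + k) ^ m'"
      using near_target_dominates[OF near(1) peak0(1) off]
        near_target_comparable[OF near(2) peak0(2) peak'] .
    then show False
      using le_double_if_power_less_double[OF _ g_nonneg \<open>1 \<le> m'\<close>] by fastforce
  qed
  then show ?thesis
    using assms target_width_inject[of l m l' m'] by (metis linorder_neqE_nat)
qed

lemma near_target_spacing:
  assumes near: "near_target l m n" "near_target l' m' n'" and "1 \<le> m'" and "n < n'"
  shows "n + target_width l m \<le> n'"
proof (rule ccontr)
  assume "\<not> n + target_width l m \<le> n'"
  define j where "j = n' - n"
  have j: "1 \<le> j" "j < target_width l m" "n' = n + j"
    using \<open>n < n'\<close> \<open>\<not> n + target_width l m \<le> n'\<close> by (auto simp: j_def)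
  have peaks': "target_peak l' m' 0" "target_peak l' m' 1"
    using target_width_ge[of l' m'] by (auto simp: target_peak_def)
  \<comment> \<open>inside the window of (l, m) the profile alternates, but (l', m') is flat at n' and n' + 1\<close>
  consider "target_peak l m j" "\<not> target_peak l m (j + 1)"
    | "target_peak l m (j + 1)" "\<not> target_peak l m j"
  proof (cases "odd j")
    case False
    then have "j + 1 < target_width l m"
      using j even_target_width[of l m] by (auto elim!: evenE)
    then show ?thesis using that False j by (auto simp: target_peak_def)
  qed (use j in \<open>auto simp: target_peak_def\<close>)
  then show False
  proof cases
    case 1
    have "g (n' + 0) \<le> 2 * g (n' + 1)"
      using near_target_comparable[OF near(2) peaks'] le_double_if_power_less_double[OF _ g_nonneg \<open>1 \<le> m'\<close>]
      by blast
    then show False using near_target_dominates[OF near(1) 1] j(3) by simp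
  next
    case 2
    have "g (n' + 1) \<le> 2 * g (n' + 0)"
      using near_target_comparable[OF near(2) peaks'(2,1)] le_double_if_power_less_double[OF _ g_nonneg \<open>1 \<le> m'\<close>]
      by blast
    then show False using near_target_dominates[OF near(1) 2] j(3) by simp
  qed
qed

lemma near_target_growth:
  assumes near: "near_target l m n" "near_target l' m' n'" and m: "1 \<le> m" "1 \<le> m'"
    and after: "n + target_width l m \<le> n'"
  shows "(n + l + l') * m' < n' * m"
proof -
  define a where "a = g n'"
  have a0: "0 \<le> a" using g_nonneg by (simp add: a_def)
  have "\<not> target_peak l m (n' - n)"
    using after target_width_ge[of l m] by (auto simp: target_peak_def)
  moreover have "n + (n' - n) = n'" using after by simp
  ultimately have small: "c ^ n * a ^ m < tolerance l m"
    using near_target_off_peak[OF near(1)] by (metis a_def)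
  have large: "c ^ (l' * m') < c ^ n' * a ^ m'"
    using near_target_peak(1)[OF near(2), of 0] power_le_height_minus_tolerance[of l' m']
    by (simp add: a_def target_peak_def)
  \<comment> \<open>raise the first estimate to the power m', the second to the power m, and compare\<close>
  have "(c ^ n * a ^ m * c ^ l) ^ m' < (tolerance l m * c ^ l) ^ m'"
    by (rule power_strict_mono) (use small base_gt_one a0 m in auto)
  also have "\<dots> \<le> 1"
    using tolerance_mult_le[of l m] tolerance_pos[of l m] base_gt_one by (intro power_le_one) auto
  moreover have "(c ^ n * a ^ m * c ^ l) ^ m' = c ^ (n * m') * c ^ (l * m') * a ^ (m * m')"
    by (simp only: power_mult_distrib power_mult) (simp add: mult_ac)
  ultimately have t1: "c ^ (n * m') * c ^ (l * m') * a ^ (m * m') < 1"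
    by simp
  have "c ^ (l' * m') \<le> (c ^ (l' * m')) ^ m"
    using m base_gt_one by (simp add: self_le_power)
  also have "\<dots> < (c ^ n' * a ^ m') ^ m"
    by (rule power_strict_mono) (use large base_gt_one m in auto)
  finally have t2: "c ^ (l' * m') < c ^ (n' * m) * a ^ (m * m')"
    by (simp add: power_mult_distrib power_mult mult.commute[of m m'])
  have "c ^ ((n + l + l') * m') = c ^ (l' * m') * (c ^ (n * m') * c ^ (l * m'))"
    by (simp add: algebra_simps power_add)
  also have "\<dots> < c ^ (n' * m) * a ^ (m * m') * (c ^ (n * m') * c ^ (l * m'))"
    using t2 base_gt_one by (intro mult_strict_right_mono) auto
  also have "\<dots> = c ^ (n' * m) * (c ^ (n * m') * c ^ (l * m') * a ^ (m * m'))"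
    by (simp add: mult_ac)
  also have "\<dots> \<le> c ^ (n' * m)"
    using t1 base_gt_one mult_left_mono[of _ 1 "c ^ (n' * m)"] by simp
  finally show ?thesis using base_gt_one power_less_imp_less_exp by blast
qed

end

lemma near_target_returns:
  assumes adm: "admissible_space S" and fam: "furstenberg_family F" and lam: "1 < norm lam"
    and hc: "A_hypercyclic S F (wshift lam) (\<lambda>k. u k ^ m)"
  shows "{n. target_matching.near_target (norm lam) (\<lambda>j. norm (u j)) l m n} \<in> F"
proof -
  interpret target_matching "norm lam" "\<lambda>j. norm (u j)"
    using lam by unfold_locales auto
  define y where "y k = complex_of_real (target l m k)" for k
  have "y \<in> seq_carrier S"
  proof (rule seq_carrier_finite_support)
    fix k assume "target_width l m \<le> k"
    then show "y k = 0" using target_width_ge[of l m] by (simp add: y_def target_def target_peak_def)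
  qed
  then have "{n. \<forall>k. norm ((wshift lam ^^ n) (\<lambda>k. u k ^ m) k - y k) < tolerance l m} \<in> F"
    by (intro A_hypercyclic_returns_to_box[OF adm fam hc] tolerance_pos)
  moreover have "near_target l m n"
    if "\<forall>k. norm ((wshift lam ^^ n) (\<lambda>k. u k ^ m) k - y k) < tolerance l m" for n
    unfolding near_target_def
  proof
    fix k
    have "\<bar>norm (lam ^ n * u (n + k) ^ m) - norm (y k)\<bar> \<le> norm (lam ^ n * u (n + k) ^ m - y k)"
      by (rule norm_triangle_ineq3)
    also have "\<dots> < tolerance l m" using that by (simp add: funpow_wshift)
    moreover have "norm (y k) = target l m k"
      using base_gt_one by (simp add: y_def target_def height_def)
    ultimately show "\<bar>norm lam ^ n * norm (u (n + k)) ^ m - target l m k\<bar> < tolerance l m"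
      by (simp add: norm_mult norm_power)
  qed
  ultimately show ?thesis
    using fam unfolding furstenberg_family_def by (metis (no_types, lifting) mem_Collect_eq subsetI)
qed

lemma necessity:
  assumes adm: "admissible_space S" and fam: "furstenberg_family F" and lam: "1 < norm lam"
    and hc: "hypercyclic_subalgebra S F (wshift lam) B"
  shows "\<exists>A. separated_return_family F A"
proof -
  have sub: "seq_subalgebra S B" using hc by (simp add: hypercyclic_subalgebra_def)
  then obtain u where u: "u \<in> B" "u \<noteq> (\<lambda>k. 0)"
    using hc by (auto simp: hypercyclic_subalgebra_def seq_subalgebra_def)
  then obtain k0 where "u k0 \<noteq> 0" by auto
  interpret target_matching "norm lam" "\<lambda>j. norm (u j)"
    using lam by unfold_locales auto
  have returns: "{n. near_target l m n} \<in> F" if "1 \<le> m" for l m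
  proof -
    have "(\<lambda>k. u k ^ m) \<noteq> (\<lambda>k. 0)" using \<open>u k0 \<noteq> 0\<close> by (metis power_eq_0_iff)
    then have "A_hypercyclic S F (wshift lam) (\<lambda>k. u k ^ m)"
      using hc seq_subalgebra_power[OF sub u(1) that] by (auto simp: hypercyclic_subalgebra_def)
    then show ?thesis by (rule near_target_returns[OF adm fam lam])
  qed
  have "separated_return_family F (\<lambda>l m. {n. near_target l m n})"
    unfolding separated_return_family_def
  proof (intro conjI allI impI)
    fix l m l' m' n n' :: nat
    assume *: "1 \<le> l \<and> 1 \<le> m \<and> 1 \<le> l' \<and> 1 \<le> m' \<and>
      n \<in> {n. near_target l m n} \<and> n' \<in> {n. near_target l' m' n} \<and> n < n'"
    then have after: "n + target_width l m \<le> n'" using near_target_spacing by auto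
    then show "n + l \<le> n'" using target_width_ge[of l m] by linarith
    have "(n + l + l') * m' < n' * m"
      using near_target_growth[OF _ _ _ _ after] * by blast
    then have "real ((n + l + l') * m') \<le> real (n' * m)" by linarith
    then show "real n + real l + real l' \<le> real n' * real m / real m'"
      using * by (simp add: field_simps)
  qed (use returns near_target_same_time in auto)
  then show ?thesis by blast
qed

section \<open>Construction of a hypercyclic algebra\<close>

lemma summable_power_mult_geometric:
  fixes r :: real
  assumes "0 \<le> r" "r < 1"
  shows "summable (\<lambda>n. real n ^ k * r ^ n)"
proof (cases "r = 0")
  case True
  show ?thesis by (rule summable_ratio_test[of 0 0]) (use True in auto)
next
  case False
  hence r0: "0 < r" using assms by simp
  define q where "q = (1 + r) / (2 * r)"
  have q1: "1 < q" using r0 assms by (simp add: q_def field_simps)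
  have "(\<lambda>n. (1 + 1 / real n) ^ k) \<longlonglongrightarrow> (1 + 0) ^ k"
    by (intro tendsto_intros lim_1_over_n)
  hence "eventually (\<lambda>n. (1 + 1 / real n) ^ k < q) sequentially"
    using q1 by (intro order_tendstoD(2)) auto
  then obtain N where N: "\<And>n. n \<ge> N \<Longrightarrow> (1 + 1 / real n) ^ k < q"
    by (auto simp: eventually_sequentially)
  show ?thesis
  proof (rule summable_ratio_test[of "(1 + r) / 2" "max N 1"])
    show "(1 + r) / 2 < 1" using assms by simp
    fix n assume n: "max N 1 \<le> n"
    hence n1: "1 \<le> n" and nN: "N \<le> n" by auto
    have "real (Suc n) = real n * (1 + 1 / real n)" using n1 by (simp add: field_simps)
    hence "real (Suc n) ^ k = real n ^ k * (1 + 1 / real n) ^ k" by (simp add: power_mult_distrib)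
    also have "\<dots> \<le> real n ^ k * q" using N[OF nN] by (intro mult_left_mono) auto
    finally have a: "real (Suc n) ^ k \<le> real n ^ k * q" .
    have "norm (real (Suc n) ^ k * r ^ Suc n) = real (Suc n) ^ k * r ^ Suc n" using assms by simp
    also have "\<dots> \<le> real n ^ k * q * r ^ Suc n" using a assms by (intro mult_right_mono) auto
    also have "\<dots> = (q * r) * (real n ^ k * r ^ n)" by (simp add: algebra_simps)
    also have "q * r = (1 + r) / 2" using r0 by (simp add: q_def field_simps)
    finally show "norm (real (Suc n) ^ k * r ^ Suc n) \<le> (1 + r) / 2 * norm (real n ^ k * r ^ n)"
      using assms by simp
  qed
qed

definition croot :: "nat \<Rightarrow> complex \<Rightarrow> complex" where
  "croot m z = (SOME w. w ^ m = z)"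

lemma croot_power: "m \<noteq> 0 \<Longrightarrow> croot m z ^ m = z"
  unfolding croot_def by (rule someI_ex) (metis exists_complex_root)

lemma poly_bounded_on_unit_disc: "\<exists>C\<ge>0. \<forall>z::complex. norm z \<le> 1 \<longrightarrow> norm (poly p z) \<le> C"
proof (intro exI conjI allI impI)
  show "0 \<le> (\<Sum>i\<le>degree p. norm (coeff p i))" by (intro sum_nonneg) auto
  fix z :: complex assume z: "norm z \<le> 1"
  have "norm (poly p z) = norm (\<Sum>i\<le>degree p. coeff p i * z ^ i)" by (simp add: poly_altdef)
  also have "\<dots> \<le> (\<Sum>i\<le>degree p. norm (coeff p i * z ^ i))" by (rule norm_sum)
  also have "\<dots> \<le> (\<Sum>i\<le>degree p. norm (coeff p i))"
  proof (rule sum_mono)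
    fix i
    have "norm (z ^ i) \<le> 1" using z by (simp add: norm_power power_le_one)
    then show "norm (coeff p i * z ^ i) \<le> norm (coeff p i)"
      by (simp add: norm_mult mult_left_le)
  qed
  finally show "norm (poly p z) \<le> (\<Sum>i\<le>degree p. norm (coeff p i))" .
qed

lemma poly_linear_bound_on_unit_disc:
  assumes "poly p 0 = (0::complex)"
  shows "\<exists>C\<ge>0. \<forall>z. norm z \<le> 1 \<longrightarrow> norm (poly p z) \<le> C * norm z"
proof -
  obtain a q where pq: "p = pCons a q" by (cases p)
  have "a = 0" using assms pq by simp
  obtain C where C: "C \<ge> 0" "\<And>z. norm z \<le> 1 \<Longrightarrow> norm (poly q z) \<le> C" using poly_bounded_on_unit_disc by blast
  show ?thesis
  proof (intro exI[of _ C] conjI allI impI)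
    fix z :: complex assume "norm z \<le> 1"
    then show "norm (poly p z) \<le> C * norm z"
      using C pq \<open>a = 0\<close> mult_left_mono[OF C(2)[OF \<open>norm z \<le> 1\<close>] norm_ge_zero[of z]]
      by (simp add: norm_mult mult.commute)
  qed (use C in auto)
qed

lemma poly_lowest_term_estimate:
  assumes "p \<noteq> 0" "poly p 0 = (0::complex)"
  shows "\<exists>m a C. 1 \<le> m \<and> a \<noteq> 0 \<and> 0 \<le> C \<and>
           (\<forall>z. norm z \<le> 1 \<longrightarrow> norm (poly p z - z ^ m * a) \<le> C * norm z ^ (m + 1))"
proof -
  obtain q where pq: "p = [:- 0, 1:] ^ order 0 p * q" and nd: "\<not> [:- 0, 1:] dvd q"
    using order_decomp[OF assms(1)] by blast
  define m where "m = order 0 p"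
  have m1: "1 \<le> m" using assms order_root[of p 0] by (simp add: m_def)
  have a0: "poly q 0 \<noteq> 0" using nd poly_eq_0_iff_dvd[of q 0] by simp
  obtain a q1 where qq: "q = pCons a q1" by (cases q)
  have aq: "a = poly q 0" using qq by simp
  obtain C where C: "C \<ge> 0" "\<And>z. norm z \<le> 1 \<Longrightarrow> norm (poly q1 z) \<le> C" using poly_bounded_on_unit_disc by blast
  have pz: "poly p z = z ^ m * (a + z * poly q1 z)" for z
  proof -
    have "poly p z = poly ([:- 0, 1:] ^ order 0 p * q) z" using arg_cong[OF pq, of "\<lambda>r. poly r z"] .
    also have "\<dots> = z ^ m * poly q z" by (simp add: m_def poly_power)
    also have "poly q z = a + z * poly q1 z" using qq by simp
    finally show ?thesis .
  qed
  show ?thesis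
  proof (intro exI[of _ m] exI[of _ a] exI[of _ C] conjI allI impI)
    fix z :: complex assume z: "norm z \<le> 1"
    have "poly p z - z ^ m * a = z ^ (m + 1) * poly q1 z" using pz by (simp add: algebra_simps)
    hence "norm (poly p z - z ^ m * a) = norm z ^ (m + 1) * norm (poly q1 z)"
      by (simp add: norm_mult norm_power)
    also have "\<dots> \<le> norm z ^ (m + 1) * C" using C(2)[OF z] by (intro mult_left_mono) auto
    finally show "norm (poly p z - z ^ m * a) \<le> C * norm z ^ (m + 1)" by (simp add: mult.commute)
  qed (use m1 a0 aq C in auto)
qed

lemma norm_poly_le_lowest_power:
  fixes p :: "complex poly"
  assumes lowest: "\<And>z. norm z \<le> 1 \<Longrightarrow> norm (poly p z - z ^ m * a) \<le> C * norm z ^ (m + 1)"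
    and "0 \<le> C" and z: "norm z \<le> 1"
  shows "norm (poly p z) \<le> (norm a + C) * norm z ^ m"
proof -
  have "norm (poly p z) \<le> norm (z ^ m * a) + norm (poly p z - z ^ m * a)"
    by (rule norm_triangle_sub)
  also have "\<dots> \<le> norm z ^ m * norm a + C * norm z ^ (m + 1)"
    using lowest[OF z] by (simp add: norm_mult norm_power)
  also have "C * norm z ^ (m + 1) \<le> C * norm z ^ m"
    using z \<open>0 \<le> C\<close> by (intro mult_left_mono) (auto simp: mult_left_le_one_le)
  finally show ?thesis by (simp add: algebra_simps)
qed

definition rat_complex :: "rat \<times> rat \<Rightarrow> complex" where
  "rat_complex q = Complex (of_rat (fst q)) (of_rat (snd q))"

definition rat_complex_list :: "nat \<Rightarrow> complex list" where
  "rat_complex_list t = map rat_complex (from_nat t)"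

lemma rat_complex_dense:
  assumes "0 < \<eta>"
  shows "\<exists>q. norm (rat_complex q - z) < \<eta>"
proof -
  obtain r1 where r1: "r1 \<in> \<rat>" "Re z - \<eta>/2 < r1" "r1 < Re z + \<eta>/2"
    using Rats_dense_in_real[of "Re z - \<eta>/2" "Re z + \<eta>/2"] assms by auto
  obtain r2 where r2: "r2 \<in> \<rat>" "Im z - \<eta>/2 < r2" "r2 < Im z + \<eta>/2"
    using Rats_dense_in_real[of "Im z - \<eta>/2" "Im z + \<eta>/2"] assms by auto
  obtain a b where ab: "r1 = of_rat a" "r2 = of_rat b" using r1(1) r2(1) Rats_cases by metis
  have "norm (Complex r1 r2 - z) \<le> \<bar>Re (Complex r1 r2 - z)\<bar> + \<bar>Im (Complex r1 r2 - z)\<bar>"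
    by (rule cmod_le)
  also have "\<dots> < \<eta>" using r1 r2 by (simp add: abs_less_iff)
  finally show ?thesis using ab by (intro exI[of _ "(a, b)"]) (simp add: rat_complex_def)
qed

lemma rat_complex_list_dense:
  assumes "0 < \<eta>"
  shows "\<exists>t. length (rat_complex_list t) = length ys \<and>
           (\<forall>i<length ys. norm (rat_complex_list t ! i - ys ! i) < \<eta>)"
proof -
  define sel where "sel z = (SOME q. norm (rat_complex q - z) < \<eta>)" for z
  have sel: "norm (rat_complex (sel z) - z) < \<eta>" for z
    unfolding sel_def by (rule someI_ex[OF rat_complex_dense[OF assms]])
  have "rat_complex_list (to_nat (map sel ys)) = map (rat_complex \<circ> sel) ys"
    by (simp add: rat_complex_list_def)
  then show ?thesis using sel by (intro exI[of _ "to_nat (map sel ys)"]) simp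
qed

locale separated_returns =
  fixes S :: seqspace and F :: "nat set set" and lam :: complex and A :: "nat \<Rightarrow> nat \<Rightarrow> nat set"
  assumes adm: "admissible_space S" and fam: "furstenberg_family F" and finv: "finitely_invariant F"
    and lam_gt_one: "1 < norm lam" and sep: "separated_return_family F A"
begin

lemma A_in_F: "1 \<le> l \<Longrightarrow> 1 \<le> m \<Longrightarrow> A l m \<in> F"
  using sep by (simp add: separated_return_family_def)

lemma A_disjoint:
  "1 \<le> l \<Longrightarrow> 1 \<le> m \<Longrightarrow> 1 \<le> l' \<Longrightarrow> 1 \<le> m' \<Longrightarrow> (l, m) \<noteq> (l', m') \<Longrightarrow> A l m \<inter> A l' m' = {}"
  using sep by (simp add: separated_return_family_def)

lemma A_gap:
  "1 \<le> l \<Longrightarrow> 1 \<le> m \<Longrightarrow> 1 \<le> l' \<Longrightarrow> 1 \<le> m' \<Longrightarrow> n \<in> A l m \<Longrightarrow> n' \<in> A l' m' \<Longrightarrow> n < n' \<Longrightarrow>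
     n + l \<le> n' \<and> real n + real l + real l' \<le> real n' * real m / real m'"
  using sep unfolding separated_return_family_def by blast

lemma A_beyond_in_F: "1 \<le> l \<Longrightarrow> 1 \<le> m \<Longrightarrow> A l m - {0..N} \<in> F"
  using finv A_in_F by (simp add: finitely_invariant_def)

definition c :: real where "c = norm lam"

lemma c_gt_one: "1 < c"
  using lam_gt_one by (simp add: c_def)

lemma c_pos: "0 < c"
  using c_gt_one by simp

definition block_threshold :: "nat \<Rightarrow> nat" where
  "block_threshold L = 2 * L * L + (LEAST N. real L \<le> c ^ N)"

lemma le_power_block_threshold: "real L \<le> c ^ block_threshold L"
proof -
  obtain N where "real L \<le> c ^ N" using real_arch_pow[OF c_gt_one] by (meson less_le)
  then have "real L \<le> c ^ (LEAST N. real L \<le> c ^ N)" by (rule LeastI)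
  also have "\<dots> \<le> c ^ block_threshold L"
    using c_gt_one by (intro power_increasing) (auto simp: block_threshold_def)
  finally show ?thesis .
qed

lemma block_threshold_ge: "2 * L * L \<le> block_threshold L"
  by (simp add: block_threshold_def)

text \<open>
  Block number L carries the list number \<open>fst (prod_decode L)\<close> of the enumeration, provided it
  has length and entries at most L. Every list thus appears in blocks of arbitrarily large index.
\<close>
definition block_list :: "nat \<Rightarrow> complex list" where
  "block_list L = (let ys = rat_complex_list (fst (prod_decode L)) in
     if length ys \<le> L \<and> (\<forall>z\<in>set ys. norm z \<le> real L) then ys else [])"

definition block_len :: "nat \<Rightarrow> nat" where
  "block_len L = length (block_list L)"

lemma block_len_le: "block_len L \<le> L"
  by (simp add: block_len_def block_list_def Let_def)

lemma norm_block_list_le: "i < block_len L \<Longrightarrow> norm (block_list L ! i) \<le> real L"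
  by (auto simp: block_len_def block_list_def Let_def split: if_splits)

definition block_start :: "nat \<Rightarrow> nat \<Rightarrow> nat \<Rightarrow> bool" where
  "block_start L m n \<longleftrightarrow> 1 \<le> m \<and> m \<le> L \<and> n \<in> A L m \<and> block_threshold L < n"

lemma block_start_gap:
  assumes "block_start L m n" "block_start L' m' n'" "n < n'"
  shows "n + L \<le> n'" "real n + real L + real L' \<le> real n' * real m / real m'"
  using A_gap[of L m L' m' n n'] assms by (auto simp: block_start_def)

lemma block_start_spacing:
  assumes "block_start L m n" "block_start L m n'" "n < n'"
  shows "n + 2 * L \<le> n'"
  using block_start_gap(2)[OF assms] assms(1) by (simp add: block_start_def)

lemma block_start_unique:
  assumes "block_start L m n" "block_start L' m' n"
  shows "(L, m) = (L', m')"
  using A_disjoint[of L m L' m'] assms by (auto simp: block_start_def)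

definition in_block :: "nat \<Rightarrow> nat \<Rightarrow> nat \<Rightarrow> nat \<Rightarrow> bool" where
  "in_block k L m n \<longleftrightarrow> block_start L m n \<and> n \<le> k \<and> k < n + block_len L"

lemma in_block_unique:
  assumes "in_block k L m n" "in_block k L' m' n'"
  shows "(L, m, n) = (L', m', n')"
proof -
  have False if "in_block k L m n" "in_block k L' m' n'" "n < n'" for L m n L' m' n'
    using block_start_gap(1)[of L m n L' m' n'] block_len_le[of L] that by (auto simp: in_block_def)
  then have "n = n'" using assms by (meson linorder_neqE_nat)
  then show ?thesis using block_start_unique assms by (auto simp: in_block_def)
qed

definition block_of :: "nat \<Rightarrow> nat \<times> nat \<times> nat" where
  "block_of k = (THE (L, m, n). in_block k L m n)"

lemma block_of_eq: "in_block k L m n \<Longrightarrow> block_of k = (L, m, n)"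
  unfolding block_of_def by (rule the_equality) (use in_block_unique in auto)

definition generator :: "nat \<Rightarrow> complex" where
  "generator k = (if \<exists>L m n. in_block k L m n then
     (case block_of k of (L, m, n) \<Rightarrow> croot m (block_list L ! (k - n) / lam ^ n)) else 0)"

lemma generator_nonzero_in_block:
  assumes "generator k \<noteq> 0"
  obtains L m n i where "block_start L m n" "i < block_len L" "k = n + i"
proof -
  obtain L m n where "in_block k L m n" using assms by (auto simp: generator_def split: if_splits)
  then show thesis using that[of L m n "k - n"] by (auto simp: in_block_def)
qed

lemma generator_power:
  assumes "block_start L m n" "i < block_len L"
  shows "lam ^ n * generator (n + i) ^ m = block_list L ! i"
proof -
  have "in_block (n + i) L m n" using assms by (simp add: in_block_def)
  then have "generator (n + i) = croot m (block_list L ! i / lam ^ n)"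
    unfolding generator_def using block_of_eq by auto
  moreover have "m \<noteq> 0" using assms by (simp add: block_start_def)
  moreover have "lam ^ n \<noteq> 0" using lam_gt_one by auto
  ultimately show ?thesis by (simp add: croot_power)
qed

lemma norm_generator_power_le:
  assumes "block_start L m n" "i < block_len L"
  shows "norm (generator (n + i)) ^ m \<le> real L / c ^ n"
proof -
  have "c ^ n * norm (generator (n + i)) ^ m \<le> real L"
    using arg_cong[OF generator_power[OF assms], of norm] norm_block_list_le[OF assms(2)]
    by (simp add: c_def norm_mult norm_power)
  then show ?thesis using c_pos by (simp add: field_simps)
qed

lemma norm_generator_le_one: "norm (generator k) \<le> 1"
proof (cases "generator k = 0")
  case False
  then obtain L m n i where b: "block_start L m n" and i: "i < block_len L" "k = n + i"
    by (rule generator_nonzero_in_block)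
  have "c ^ block_threshold L \<le> c ^ n"
    using b c_gt_one by (intro power_increasing) (auto simp: block_start_def)
  then have "real L \<le> c ^ n" using le_power_block_threshold[of L] by linarith
  have "norm (generator k) ^ m \<le> real L / c ^ n"
    using norm_generator_power_le[OF b i(1)] i by simp
  also have "\<dots> \<le> 1" using \<open>real L \<le> c ^ n\<close> c_pos by simp
  finally have "norm (generator k) ^ m \<le> 1" .
  then show ?thesis using b by (simp add: power_le_one_iff block_start_def)
qed simp

lemma norm_generator_power_le_powr:
  assumes b: "block_start L m n" and i: "i < block_len L" and \<mu>: "1 \<le> \<mu>"
  shows "norm (generator (n + i)) ^ \<mu> \<le> real L ^ \<mu> * c powr (- (real n * real \<mu> / real m))"
proof (cases "generator (n + i) = 0")
  case True then show ?thesis using \<mu> by (simp add: zero_power)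
next
  case False
  define a where "a = norm (generator (n + i))"
  have a0: "0 < a" using False by (simp add: a_def)
  have m1: "1 \<le> m" and L1: "1 \<le> L" using b by (auto simp: block_start_def)
  have am: "a ^ m \<le> real L / c ^ n" using norm_generator_power_le[OF b i] by (simp add: a_def)
  have "a ^ \<mu> = (a ^ m) powr (real \<mu> / real m)"
    using a0 m1 by (simp add: powr_realpow[symmetric] powr_powr)
  also have "\<dots> \<le> (real L / c ^ n) powr (real \<mu> / real m)"
    using am a0 by (intro powr_mono2) auto
  also have "\<dots> = real L powr (real \<mu> / real m) / c powr (real n * real \<mu> / real m)"
    using c_pos by (simp add: powr_divide powr_realpow[symmetric] powr_powr)
  also have "real L powr (real \<mu> / real m) \<le> real L powr real \<mu>"
    using L1 m1 \<mu> by (intro powr_mono) (auto simp: field_simps)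
  also have "real L powr real \<mu> = real L ^ \<mu>" using L1 by (simp add: powr_realpow)
  finally show ?thesis using c_pos by (simp add: a_def powr_minus divide_inverse)
qed

end

lemma powr_neg_le_power_floor:
  fixes c X :: real
  assumes "1 < c" "0 \<le> X"
  shows "c powr (- X) \<le> (1 / c) ^ nat \<lfloor>X\<rfloor>"
proof -
  have "c powr (- X) \<le> c powr (- real (nat \<lfloor>X\<rfloor>))"
    using assms by (intro powr_mono) linarith+
  also have "c powr (- real k) = (1 / c) ^ k" for k :: nat
    using assms by (simp add: powr_minus powr_realpow power_one_over inverse_eq_divide)
  finally show ?thesis .
qed

context separated_returns
begin

lemma inj_on_decay_index:
  fixes X :: "nat \<Rightarrow> real"
  assumes blocks: "\<And>k. k \<in> Q \<Longrightarrow> in_block k L m (start k) \<and> 0 \<le> X (start k)"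
    and spacing: "\<And>n n'. block_start L m n \<Longrightarrow> block_start L m n' \<Longrightarrow> n < n' \<Longrightarrow> X n + 1 \<le> X n'"
  shows "inj_on (\<lambda>k. (nat \<lfloor>X (start k)\<rfloor>, k - start k)) Q"
proof (rule inj_onI)
  fix k1 k2 assume k: "k1 \<in> Q" "k2 \<in> Q" and eq: "(nat \<lfloor>X (start k1)\<rfloor>, k1 - start k1) = (nat \<lfloor>X (start k2)\<rfloor>, k2 - start k2)"
  have False if "k1 \<in> Q" "k2 \<in> Q" "nat \<lfloor>X (start k1)\<rfloor> = nat \<lfloor>X (start k2)\<rfloor>" "start k1 < start k2" for k1 k2
  proof -
    have "X (start k1) + 1 \<le> X (start k2)"
      using blocks[OF that(1)] blocks[OF that(2)] spacing that(4) by (auto simp: in_block_def)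
    then have "\<lfloor>X (start k1)\<rfloor> + 1 \<le> \<lfloor>X (start k2)\<rfloor>" by linarith
    then show False using that(3) blocks[OF that(1)] by linarith
  qed
  then have "start k1 = start k2" using k eq by (metis linorder_neqE_nat prod.inject)
  moreover have "start k1 \<le> k1" "start k2 \<le> k2" using blocks k by (auto simp: in_block_def)
  ultimately show "k1 = k2" using eq by simp
qed

text \<open>
  Positions of a fixed block type (L, m) are indexed injectively by the integer part of their
  decay exponent and their offset inside the block, so a sum of terms decaying geometrically in that
  exponent is bounded by L times a geometric series.
\<close>
lemma sum_block_type_decay_le:
  fixes X :: "nat \<Rightarrow> real"
  assumes "finite Q" and "0 \<le> b"
    and blocks: "\<And>k. k \<in> Q \<Longrightarrow> in_block k L m (start k) \<and> 0 \<le> X (start k) \<and> f k \<le> b * c powr (- X (start k))"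
    and spacing: "\<And>n n'. block_start L m n \<Longrightarrow> block_start L m n' \<Longrightarrow> n < n' \<Longrightarrow> X n + 1 \<le> X n'"
  shows "sum f Q \<le> b * real L * (c / (c - 1))"
proof -
  define \<phi> where "\<phi> k = (nat \<lfloor>X (start k)\<rfloor>, k - start k)" for k
  have inj: "inj_on \<phi> Q"
    unfolding \<phi>_def by (rule inj_on_decay_index) (use blocks spacing in auto)
  define J where "J = Suc (Max (insert 0 (fst ` \<phi> ` Q)))"
  have range: "\<phi> ` Q \<subseteq> {..<J} \<times> {..<L}"
  proof
    fix t assume "t \<in> \<phi> ` Q"
    then obtain k where k: "k \<in> Q" "t = \<phi> k" by blast
    have "fst t \<le> Max (insert 0 (fst ` \<phi> ` Q))"
      using k \<open>finite Q\<close> by (intro Max_ge) auto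
    moreover have "k - start k < L" using blocks[OF k(1)] block_len_le[of L] by (auto simp: in_block_def)
    ultimately show "t \<in> {..<J} \<times> {..<L}" using k by (auto simp: J_def \<phi>_def)
  qed
  define h where "h = (\<lambda>(j::nat, i::nat). b * (1 / c) ^ j)"
  have "sum f Q \<le> sum (\<lambda>k. h (\<phi> k)) Q"
  proof (rule sum_mono)
    fix k assume k: "k \<in> Q"
    have "f k \<le> b * c powr (- X (start k))" using blocks[OF k] by blast
    also have "\<dots> \<le> b * (1 / c) ^ nat \<lfloor>X (start k)\<rfloor>"
      using powr_neg_le_power_floor[OF c_gt_one] blocks[OF k] \<open>0 \<le> b\<close> by (intro mult_left_mono) auto
    finally show "f k \<le> h (\<phi> k)" by (simp add: h_def \<phi>_def)
  qed
  also have "\<dots> = sum h (\<phi> ` Q)" by (rule sum.reindex[OF inj, symmetric, unfolded comp_def])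
  also have "\<dots> \<le> sum h ({..<J} \<times> {..<L})"
    by (rule sum_mono2) (use range \<open>0 \<le> b\<close> c_pos in \<open>auto simp: h_def\<close>)
  also have "\<dots> = b * real L * (\<Sum>j<J. (1 / c) ^ j)"
    by (simp add: h_def sum.cartesian_product[symmetric] sum_distrib_left mult_ac)
  also have "(\<Sum>j<J. (1 / c) ^ j) \<le> (\<Sum>j. (1 / c) ^ j)"
    using c_gt_one by (intro sum_le_suminf) auto
  also have "\<dots> = c / (c - 1)"
    using c_gt_one suminf_geometric[of "1 / c"] by (simp add: field_simps)
  finally show ?thesis using \<open>0 \<le> b\<close> by (simp add: mult_left_mono)
qed

lemma sum_block_decay_le:
  fixes f \<beta> :: "nat \<Rightarrow> real" and X :: "nat \<Rightarrow> nat \<Rightarrow> nat \<Rightarrow> real"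
  assumes f_nonneg: "\<And>k. 0 \<le> f k" and \<beta>_nonneg: "\<And>L. 0 \<le> \<beta> L"
    and summable_\<beta>: "summable (\<lambda>L. real L ^ 2 * \<beta> L)"
    and decay: "\<And>k. f k \<noteq> 0 \<Longrightarrow> \<exists>L m n. in_block k L m n \<and> 0 \<le> X L m n \<and> f k \<le> \<beta> L * c powr (- X L m n)"
    and spacing: "\<And>L m n n'. block_start L m n \<Longrightarrow> block_start L m n' \<Longrightarrow> n < n' \<Longrightarrow> X L m n + 1 \<le> X L m n'"
    and "finite K"
  shows "sum f K \<le> (\<Sum>L. real L ^ 2 * \<beta> L) * (c / (c - 1))"
proof -
  define K' where "K' = {k \<in> K. f k \<noteq> 0}"
  have "finite K'" using \<open>finite K\<close> by (simp add: K'_def)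
  have "sum f K = sum f K'" by (rule sum.mono_neutral_right) (use \<open>finite K\<close> in \<open>auto simp: K'_def\<close>)
  define type where "type k = (fst (block_of k), fst (snd (block_of k)))" for k
  define start where "start k = snd (snd (block_of k))" for k
  have blocks: "in_block k L m (start k) \<and> 0 \<le> X L m (start k) \<and> f k \<le> \<beta> L * c powr (- X L m (start k))"
    if "k \<in> K'" "type k = (L, m)" for k L m
  proof -
    have "f k \<noteq> 0" using \<open>k \<in> K'\<close> by (simp add: K'_def)
    then obtain L' m' n where *: "in_block k L' m' n" "0 \<le> X L' m' n" "f k \<le> \<beta> L' * c powr (- X L' m' n)"
      using decay by blast
    then show ?thesis using block_of_eq[OF *(1)] that(2) by (simp add: type_def start_def)
  qed
  define M where "M = Max (insert 0 K)"
  define T where "T = Sigma {..M} (\<lambda>L. {1..L})"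
  have types: "type ` K' \<subseteq> T"
  proof
    fix y assume "y \<in> type ` K'"
    then obtain k L m where k: "k \<in> K'" "y = (L, m)" "type k = (L, m)" by (metis surj_pair imageE)
    then have b: "block_start L m (start k)" and "start k \<le> k"
      using blocks[OF k(1,3)] by (auto simp: in_block_def)
    moreover have "L \<le> block_threshold L" using block_threshold_ge[of L] le_square[of L] by linarith
    moreover have "k \<le> M" unfolding M_def using k \<open>finite K\<close> by (intro Max_ge) (auto simp: K'_def)
    ultimately have "L \<le> M" by (simp add: block_start_def)
    then show "y \<in> T" using k b by (auto simp: T_def block_start_def)
  qed
  have "sum f K' = (\<Sum>y\<in>T. sum f {k \<in> K'. type k = y})"
    by (rule sum.group[symmetric, OF \<open>finite K'\<close> _ types]) (simp add: T_def)
  also have "\<dots> \<le> (\<Sum>(L, m)\<in>T. \<beta> L * real L * (c / (c - 1)))"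
  proof (intro sum_mono, clarify)
    fix L m
    show "sum f {k \<in> K'. type k = (L, m)} \<le> \<beta> L * real L * (c / (c - 1))"
      by (rule sum_block_type_decay_le[where X = "X L m" and start = start])
         (use \<open>finite K'\<close> \<beta>_nonneg blocks spacing in auto)
  qed
  also have "\<dots> = (\<Sum>L\<le>M. \<Sum>m\<in>{1..L}. \<beta> L * real L * (c / (c - 1)))"
    unfolding T_def by (rule sum.Sigma[symmetric]) auto
  also have "\<dots> = (\<Sum>L\<le>M. real L ^ 2 * \<beta> L * (c / (c - 1)))"
    by (rule sum.cong) (simp_all add: power2_eq_square)
  also have "\<dots> = (\<Sum>L\<le>M. real L ^ 2 * \<beta> L) * (c / (c - 1))"
    by (rule sum_distrib_right[symmetric])
  also have "\<dots> \<le> (\<Sum>L. real L ^ 2 * \<beta> L) * (c / (c - 1))"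
    using c_gt_one \<beta>_nonneg by (intro mult_right_mono sum_le_suminf[OF summable_\<beta>]) auto
  finally show ?thesis using \<open>sum f K = sum f K'\<close> by simp
qed

end

context separated_returns
begin

lemma block_exponent_spacing:
  assumes "1 \<le> \<mu>" "block_start L m n" "block_start L m n'" "n < n'"
  shows "real n * real \<mu> / real m + 2 \<le> real n' * real \<mu> / real m"
proof -
  have "n + 2 * L \<le> n'" and m: "1 \<le> m" "m \<le> L"
    using block_start_spacing[OF assms(2-4)] assms(2) by (auto simp: block_start_def)
  then have "real n + 2 * real m \<le> real n'" by linarith
  then have "(real n + 2 * real m) * real \<mu> / real m \<le> real n' * real \<mu> / real m"
    using assms(1) by (intro divide_right_mono mult_right_mono) auto
  moreover have "2 * real m * real \<mu> / real m \<ge> 2"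
    using m assms(1) by simp
  ultimately show ?thesis by (simp add: distrib_right add_divide_distrib)
qed

lemma norm_generator_decay:
  assumes b: "block_start L m n" and i: "i < block_len L"
  shows "norm (generator (n + i)) \<le> real L * c powr (- real L) * c powr (- (real n / (2 * real m)))"
proof -
  have m: "1 \<le> m" "m \<le> L" and "block_threshold L < n" using b by (auto simp: block_start_def)
  \<comment> \<open>n exceeds the threshold 2 L^2 \<open>\<ge>\<close> 2 L m, so half of the exponent n / m already gives the factor c powr (- L)\<close>
  then have "L * (2 * m) \<le> n" using block_threshold_ge[of L] mult_le_mono2[of m L "2 * L"] by linarith
  then have "real (L * (2 * m)) \<le> real n" by (rule of_nat_mono)
  then have "real L \<le> real n / (2 * real m)" using m by (simp add: field_simps)
  then have "c powr (- (real n / (2 * real m))) \<le> c powr (- real L)"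
    using c_gt_one by (intro powr_mono) auto
  moreover have "c powr (- (real n / real m))
      = c powr (- (real n / (2 * real m))) * c powr (- (real n / (2 * real m)))"
    by (simp add: powr_add[symmetric])
  ultimately have "c powr (- (real n / real m)) \<le> c powr (- real L) * c powr (- (real n / (2 * real m)))"
    by (simp add: mult_right_mono)
  then show ?thesis
    using norm_generator_power_le_powr[OF b i, of 1] mult_left_mono[of _ _ "real L"] by fastforce
qed

lemma summable_norm_generator: "summable (\<lambda>k. norm (generator k))"
proof -
  define \<beta> where "\<beta> L = real L * c powr (- real L)" for L :: nat
  have "summable (\<lambda>L. real L ^ 3 * (1 / c) ^ L)"
    by (rule summable_power_mult_geometric) (use c_gt_one in auto)
  moreover have "real L ^ 3 * (1 / c) ^ L = real L ^ 2 * \<beta> L" for L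
    using c_pos by (simp add: \<beta>_def powr_minus powr_realpow power_one_over inverse_eq_divide power3_eq_cube power2_eq_square)
  ultimately have summable_\<beta>: "summable (\<lambda>L. real L ^ 2 * \<beta> L)" by simp
  have "sum (\<lambda>k. norm (generator k)) K \<le> (\<Sum>L. real L ^ 2 * \<beta> L) * (c / (c - 1))" if "finite K" for K
  proof (rule sum_block_decay_le[where X = "\<lambda>L m n. real n / (2 * real m)"])
    fix k assume "norm (generator k) \<noteq> 0"
    then have "generator k \<noteq> 0" by simp
    then obtain L m n i where b: "block_start L m n" and i: "i < block_len L" "k = n + i"
      by (rule generator_nonzero_in_block)
    then have "in_block k L m n" by (simp add: in_block_def)
    moreover have "norm (generator k) \<le> \<beta> L * c powr (- (real n / (2 * real m)))"
      using norm_generator_decay[OF b i(1)] i by (simp add: \<beta>_def)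
    ultimately show "\<exists>L m n. in_block k L m n \<and> 0 \<le> real n / (2 * real m) \<and>
        norm (generator k) \<le> \<beta> L * c powr (- (real n / (2 * real m)))"
      by auto
  next
    fix L m n n' assume "block_start L m n" "block_start L m n'" "n < n'"
    then have "real n / real m + 2 \<le> real n' / real m"
      using block_exponent_spacing[of 1] by simp
    moreover have "real k / (2 * real m) = real k / real m / 2" for k
      by (simp add: mult.commute)
    ultimately show "real n / (2 * real m) + 1 \<le> real n' / (2 * real m)"
      by simp
  qed (use that summable_\<beta> in \<open>auto simp: \<beta>_def\<close>)
  then show ?thesis by (intro summableI_nonneg_bounded) auto
qed

lemma summable_norm_poly_generator:
  assumes "poly p 0 = 0"
  shows "summable (\<lambda>k. norm (poly p (generator k)))"
proof -
  obtain C where "\<And>z. norm z \<le> 1 \<Longrightarrow> norm (poly p z) \<le> C * norm z"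
    using poly_linear_bound_on_unit_disc[OF assms] by blast
  then have "norm (norm (poly p (generator k))) \<le> C * norm (generator k)" for k
    using norm_generator_le_one by simp
  then show ?thesis
    by (rule summable_comparison_test'[OF summable_mult[OF summable_norm_generator]])
qed

lemma later_block_start:
  assumes b: "block_start L m n" and j: "in_block j L' m' n'" and after: "n + block_len L \<le> j"
  shows "n < n'"
proof -
  have b': "block_start L' m' n'" and "j < n' + block_len L'" using j by (auto simp: in_block_def)
  have False if "n' < n"
    using block_start_gap(1)[OF b' b that] block_len_le[of L'] \<open>j < n' + block_len L'\<close> after by linarith
  moreover have False if "n' = n"
    using block_start_unique[OF b b'[unfolded that]] \<open>j < n' + block_len L'\<close> after that by simp
  ultimately show ?thesis by (metis linorder_cases)
qed

lemma later_block_exponent_ge: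
  assumes "block_start L m n" "block_start L' m' n'" "n < n'"
  shows "(real L + real L') / 2 \<le> (real n' * real m / real m' - real n) / 2"
  using block_start_gap(2)[OF assms] by (intro divide_right_mono) auto

text \<open>
  The growth condition on A makes a later block of type (L', m') carry \<open>c ^ n * \<bar>generator\<bar> ^ m\<close>
  at most of size \<open>c powr (- 2 * Y)\<close>, where \<open>2 * Y = n' * m / m' - n \<ge> L + L'\<close>.
\<close>
lemma tail_term_le:
  assumes b: "block_start L m n" and b': "block_start L' m' n'" and i: "i < block_len L'"
    and "n < n'" and "0 \<le> C" and poly_le: "\<And>z. norm z \<le> 1 \<Longrightarrow> norm (poly p z) \<le> C * norm z ^ m"
  shows "c ^ n * norm (poly p (generator (n' + i)))
           \<le> C * c powr (- (real L / 2)) * (real L' ^ m * c powr (- (real L' / 2)))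
               * c powr (- ((real n' * real m / real m' - real n) / 2))"
proof -
  define Y where "Y = (real n' * real m / real m' - real n) / 2"
  have m: "1 \<le> m" using b by (simp add: block_start_def)
  have "(real L + real L') / 2 \<le> Y"
    using later_block_exponent_ge[OF b b' \<open>n < n'\<close>] by (simp only: Y_def)
  then have "c powr (- Y) \<le> c powr (- (real L / 2) + - (real L' / 2))"
    using c_gt_one by (intro powr_mono) auto
  then have decay: "c powr (- Y) \<le> c powr (- (real L / 2)) * c powr (- (real L' / 2))"
    by (simp only: powr_add)
  have "c ^ n * norm (poly p (generator (n' + i))) \<le> c ^ n * (C * norm (generator (n' + i)) ^ m)"
    using poly_le[OF norm_generator_le_one] c_pos by (intro mult_left_mono) auto
  also have "\<dots> \<le> c ^ n * (C * (real L' ^ m * c powr (- (real n' * real m / real m'))))"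
    using norm_generator_power_le_powr[OF b' i m] \<open>0 \<le> C\<close> c_pos by (intro mult_left_mono) auto
  also have "\<dots> = C * real L' ^ m * (c powr (- Y) * c powr (- Y))"
    using c_pos by (simp add: Y_def powr_realpow[symmetric] powr_add[symmetric] mult_ac)
  also from decay have "C * real L' ^ m * (c powr (- Y) * c powr (- Y))
      \<le> C * real L' ^ m * ((c powr (- (real L / 2)) * c powr (- (real L' / 2))) * c powr (- Y))"
    using \<open>0 \<le> C\<close> by (intro mult_left_mono mult_right_mono) auto
  finally show ?thesis by (simp add: Y_def mult_ac)
qed

lemma tail_sum_after_block_le:
  assumes b: "block_start L m n" and "0 \<le> C"
    and poly_le: "\<And>z. norm z \<le> 1 \<Longrightarrow> norm (poly p z) \<le> C * norm z ^ m"
    and p0: "poly p 0 = 0" and K: "finite K" "K \<subseteq> {block_len L..}"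
  shows "(\<Sum>k\<in>K. norm (lam ^ n * poly p (generator (n + k))))
           \<le> C * c powr (- (real L / 2)) * (\<Sum>L'. real L' ^ (m + 2) * (c powr (-1/2)) ^ L') * (c / (c - 1))"
proof -
  define r where "r = c powr (-1/2)"
  have r: "0 \<le> r" "r < 1" using c_gt_one by (auto simp: r_def intro: powr_less_one)
  define f where "f j = (if n + block_len L \<le> j then c ^ n * norm (poly p (generator j)) else 0)" for j
  define \<beta> where "\<beta> L' = C * c powr (- (real L / 2)) * (real L' ^ m * c powr (- (real L' / 2)))" for L' :: nat
  define X where "X L' m' n' = (real n' * real m / real m' - real n) / 2" for L' m' n' :: nat
  have "sum f ((+) n ` K) = (\<Sum>k\<in>K. f (n + k))"
    by (rule sum.reindex_cong[where l = "(+) n"]) (auto simp: inj_on_def)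
  also have "\<dots> = (\<Sum>k\<in>K. norm (lam ^ n * poly p (generator (n + k))))"
    using K(2) by (intro sum.cong) (auto simp: f_def c_def norm_mult norm_power)
  finally have shift: "(\<Sum>k\<in>K. norm (lam ^ n * poly p (generator (n + k)))) = sum f ((+) n ` K)" ..
  have \<beta>_eq: "real L' ^ 2 * \<beta> L' = C * c powr (- (real L / 2)) * (real L' ^ (m + 2) * r ^ L')" for L'
    using c_pos by (simp add: \<beta>_def r_def powr_realpow[symmetric] powr_powr power_add power2_eq_square mult_ac)
  have summable_r: "summable (\<lambda>L'. real L' ^ (m + 2) * r ^ L')"
    by (rule summable_power_mult_geometric[OF r])
  have summable_\<beta>: "summable (\<lambda>L'. real L' ^ 2 * \<beta> L')"
    unfolding \<beta>_eq by (rule summable_mult[OF summable_r])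
  have "sum f ((+) n ` K) \<le> (\<Sum>L'. real L' ^ 2 * \<beta> L') * (c / (c - 1))"
  proof (rule sum_block_decay_le[where X = X])
    fix j assume "f j \<noteq> 0"
    then have after: "n + block_len L \<le> j" and "generator j \<noteq> 0"
      using p0 by (auto simp: f_def split: if_splits)
    then obtain L' m' n' i where b': "block_start L' m' n'" and i: "i < block_len L'" "j = n' + i"
      by (elim generator_nonzero_in_block)
    then have ib: "in_block j L' m' n'" by (simp add: in_block_def)
    have "n < n'" using later_block_start[OF b ib after] .
    have "0 \<le> (real L + real L') / 2" by simp
    then have "0 \<le> X L' m' n'"
      using later_block_exponent_ge[OF b b' \<open>n < n'\<close>] unfolding X_def by linarith
    moreover have "f j \<le> \<beta> L' * c powr (- X L' m' n')"
      using tail_term_le[OF b b' i(1) \<open>n < n'\<close> \<open>0 \<le> C\<close> poly_le] after i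
      by (simp add: f_def \<beta>_def X_def)
    ultimately show "\<exists>L m n. in_block j L m n \<and> 0 \<le> X L m n \<and> f j \<le> \<beta> L * c powr (- X L m n)"
      using ib by blast
  next
    fix L' m' n1 n2 assume spaced: "block_start L' m' n1" "block_start L' m' n2" "n1 < n2"
    have "1 \<le> m" using b by (simp add: block_start_def)
    then have "real n1 * real m / real m' + 2 \<le> real n2 * real m / real m'"
      using block_exponent_spacing[OF _ spaced] by blast
    then show "X L' m' n1 + 1 \<le> X L' m' n2" unfolding X_def by argo
  qed (use \<open>0 \<le> C\<close> c_pos K summable_\<beta> in \<open>auto simp: f_def \<beta>_def\<close>)
  also have "(\<Sum>L'. real L' ^ 2 * \<beta> L') = C * c powr (- (real L / 2)) * (\<Sum>L'. real L' ^ (m + 2) * r ^ L')"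
    unfolding \<beta>_eq by (rule suminf_mult[OF summable_r])
  finally show ?thesis using shift by (simp add: r_def)
qed

end

context separated_returns
begin

lemma block_list_approx:
  assumes "0 < \<eta>"
  shows "\<exists>L\<ge>N. block_len L = length ys \<and> (\<forall>i<length ys. norm (block_list L ! i - ys ! i) < \<eta>)"
proof -
  obtain t where t: "length (rat_complex_list t) = length ys"
    "\<forall>i<length ys. norm (rat_complex_list t ! i - ys ! i) < \<eta>"
    using rat_complex_list_dense[OF assms] by blast
  define B where "B = Max (insert 0 (norm ` set (rat_complex_list t)))"
  define L where "L = prod_encode (t, max N (max (length ys) (nat \<lceil>B\<rceil>)))"
  have L: "max N (max (length ys) (nat \<lceil>B\<rceil>)) \<le> L"
    unfolding L_def by (rule le_prod_encode_2)
  have "norm z \<le> real L" if "z \<in> set (rat_complex_list t)" for z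
  proof -
    have "norm z \<le> B" unfolding B_def using that by (intro Max_ge) auto
    then show ?thesis using L by linarith
  qed
  then have "block_list L = rat_complex_list t"
    using L t(1) by (simp add: block_list_def L_def Let_def)
  then show ?thesis using L t by (intro exI[of _ L]) (simp add: block_len_def)
qed

lemma norm_generator_small_on_late_blocks:
  assumes "0 < \<eta>"
  obtains N where "\<And>n i. block_start L m n \<Longrightarrow> N < n \<Longrightarrow> i < block_len L \<Longrightarrow> norm (generator (n + i)) \<le> \<eta>"
proof -
  obtain N where N: "real L / \<eta> ^ m < c ^ N" using real_arch_pow[OF c_gt_one] by blast
  have "norm (generator (n + i)) \<le> \<eta>" if b: "block_start L m n" and "N < n" and i: "i < block_len L" for n i
  proof -
    have "c ^ N \<le> c ^ n" using \<open>N < n\<close> c_gt_one by (intro power_increasing) auto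
    have "norm (generator (n + i)) ^ m \<le> real L / c ^ n" by (rule norm_generator_power_le[OF b i])
    also have "\<dots> \<le> real L / c ^ N"
      using \<open>c ^ N \<le> c ^ n\<close> c_pos by (intro divide_left_mono) auto
    also have "\<dots> < \<eta> ^ m" using N c_pos \<open>0 < \<eta>\<close> by (simp add: field_simps)
    finally show ?thesis using power_less_imp_less_base \<open>0 < \<eta>\<close> by fastforce
  qed
  then show ?thesis by (rule that)
qed

lemma head_term_close:
  assumes b: "block_start L m n" and i: "i < block_len L" and "0 \<le> C"
    and lowest: "\<And>z. norm z \<le> 1 \<Longrightarrow> norm (poly p z - z ^ m * a) \<le> C * norm z ^ (m + 1)"
  shows "norm (lam ^ n * poly p (generator (n + i)) - a * block_list L ! i)
           \<le> C * real L * norm (generator (n + i))"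
proof -
  define z where "z = generator (n + i)"
  have pw: "lam ^ n * z ^ m = block_list L ! i" using generator_power[OF b i] by (simp add: z_def)
  have "lam ^ n * poly p z - a * block_list L ! i = lam ^ n * (poly p z - z ^ m * a)"
    by (simp add: pw[symmetric] algebra_simps)
  then have "norm (lam ^ n * poly p z - a * block_list L ! i) = c ^ n * norm (poly p z - z ^ m * a)"
    by (simp add: c_def norm_mult norm_power)
  also have "\<dots> \<le> c ^ n * (C * norm z ^ (m + 1))"
    using lowest norm_generator_le_one c_pos by (simp add: z_def)
  also have "\<dots> = C * norm (block_list L ! i) * norm z"
    by (simp add: pw[symmetric] c_def norm_mult norm_power)
  also have "\<dots> \<le> C * real L * norm z"
    using norm_block_list_le[OF i] \<open>0 \<le> C\<close> by (intro mult_right_mono mult_left_mono) auto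
  finally show ?thesis by (simp add: z_def)
qed

lemma tail_factor_small:
  assumes "0 < \<epsilon>" "0 \<le> G"
  shows "\<exists>j0. \<forall>L\<ge>j0. c powr (- (real L / 2)) * G \<le> \<epsilon>"
proof -
  define r where "r = c powr (-1/2)"
  have r: "0 \<le> r" "r < 1" using c_gt_one by (auto simp: r_def intro: powr_less_one)
  have "eventually (\<lambda>L. r ^ L < \<epsilon> / (G + 1)) sequentially"
    using assms by (intro order_tendstoD(2)[OF LIMSEQ_power_zero]) (use r in auto)
  then obtain j0 where j0: "\<And>L. L \<ge> j0 \<Longrightarrow> r ^ L < \<epsilon> / (G + 1)"
    by (auto simp: eventually_sequentially)
  have "c powr (- (real L / 2)) * G \<le> \<epsilon>" if "L \<ge> j0" for L
  proof -
    have "c powr (- (real L / 2)) = r ^ L"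
      using c_pos by (simp add: r_def powr_realpow[symmetric] powr_powr)
    then have "c powr (- (real L / 2)) * G \<le> \<epsilon> / (G + 1) * G"
      using j0[OF that] assms by (intro mult_right_mono) auto
    also have "\<dots> \<le> \<epsilon>" using assms by (simp add: field_simps)
    finally show ?thesis .
  qed
  then show ?thesis by blast
qed

lemma block_list_approx_scaled:
  assumes "a \<noteq> 0" "0 < \<epsilon>"
  shows "\<exists>L\<ge>N. block_len L = w \<and> (\<forall>i<w. norm (a * block_list L ! i - v i) \<le> \<epsilon>)"
proof -
  obtain L where "L \<ge> N" and len: "block_len L = w"
    and approx: "\<And>i. i < w \<Longrightarrow> norm (block_list L ! i - v i / a) < \<epsilon> / norm a"
    using block_list_approx[of "\<epsilon> / norm a" N "map (\<lambda>i. v i / a) [0..<w]"] assms by auto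
  have "norm (a * block_list L ! i - v i) \<le> \<epsilon>" if "i < w" for i
  proof -
    have "norm (a * block_list L ! i - v i) = norm a * norm (block_list L ! i - v i / a)"
      using \<open>a \<noteq> 0\<close> by (simp add: norm_mult[symmetric] right_diff_distrib)
    also have "\<dots> \<le> norm a * (\<epsilon> / norm a)"
      using approx[OF that] by (intro mult_left_mono) auto
    finally show ?thesis using \<open>a \<noteq> 0\<close> by simp
  qed
  then show ?thesis using \<open>L \<ge> N\<close> len by blast
qed

lemma shifted_poly_generator_head_tail_close:
  assumes b: "block_start L m n" and len: "block_len L = w" and "0 \<le> C" and p0: "poly p 0 = 0"
    and lowest: "\<And>z. norm z \<le> 1 \<Longrightarrow> norm (poly p z - z ^ m * a) \<le> C * norm z ^ (m + 1)"
    and list: "\<And>i. i < w \<Longrightarrow> norm (a * block_list L ! i - v i) \<le> \<delta> / 2"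
    and small: "\<And>i. i < w \<Longrightarrow> C * real L * norm (generator (n + i)) \<le> \<delta> / 2"
    and tail: "(norm a + C) * c powr (- (real L / 2)) * (\<Sum>L'. real L' ^ (m + 2) * (c powr (-1/2)) ^ L')
                 * (c / (c - 1)) \<le> \<delta>"
  shows "head_tail_close w \<delta> (\<lambda>k. lam ^ n * poly p (generator (n + k))) v"
  unfolding head_tail_close_def
proof (intro conjI allI impI)
  fix i assume "i < w"
  define y where "y = lam ^ n * poly p (generator (n + i))"
  have "norm (y - a * block_list L ! i) \<le> \<delta> / 2"
    using head_term_close[OF b _ \<open>0 \<le> C\<close> lowest] small[OF \<open>i < w\<close>] \<open>i < w\<close> len
    unfolding y_def by fastforce
  then show "norm (y - v i) \<le> \<delta>"
    using list[OF \<open>i < w\<close>] norm_triangle_ineq[of "y - a * block_list L ! i" "a * block_list L ! i - v i"]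
    by simp
next
  fix K :: "nat set" assume "finite K" "K \<subseteq> {w..}"
  then show "(\<Sum>k\<in>K. norm (lam ^ n * poly p (generator (n + k)))) \<le> \<delta>"
    using tail_sum_after_block_le[OF b _ norm_poly_le_lowest_power[OF lowest \<open>0 \<le> C\<close>] p0] len
      \<open>0 \<le> C\<close> tail by fastforce
qed

lemma poly_generator_returns:
  assumes "p \<noteq> 0" and p0: "poly p 0 = 0" and U: "seq_open S U" "U \<noteq> {}"
  shows "{n. (wshift lam ^^ n) (\<lambda>k. poly p (generator k)) \<in> U} \<in> F"
proof -
  obtain v where "v \<in> U" using U(2) by blast
  then have v: "v \<in> seq_carrier S" using U(1) by (auto simp: seq_open_def)
  obtain e where "0 < e" and ball: "\<And>x. x \<in> seq_carrier S \<Longrightarrow> seq_norm S (\<lambda>k. x k - v k) < e \<Longrightarrow> x \<in> U"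
    using U(1) \<open>v \<in> U\<close> unfolding seq_open_def by blast
  obtain w \<delta> where "0 < \<delta>"
    and close: "\<And>x. x \<in> seq_carrier S \<Longrightarrow> head_tail_close w \<delta> x v \<Longrightarrow> seq_norm S (\<lambda>k. x k - v k) < e"
    using seq_norm_diff_less_if_head_tail_close[OF adm v \<open>0 < e\<close>] by blast
  obtain m a C where "1 \<le> m" "a \<noteq> 0" "0 \<le> C"
    and lowest: "\<And>z. norm z \<le> 1 \<Longrightarrow> norm (poly p z - z ^ m * a) \<le> C * norm z ^ (m + 1)"
    using poly_lowest_term_estimate[OF \<open>p \<noteq> 0\<close> p0] by blast
  define G where "G = (norm a + C) * (\<Sum>L'. real L' ^ (m + 2) * (c powr (-1/2)) ^ L') * (c / (c - 1))"
  have "0 \<le> c powr (-1/2)" "c powr (-1/2) < 1" using c_gt_one by (auto intro: powr_less_one)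
  then have "0 \<le> (\<Sum>L'. real L' ^ (m + 2) * (c powr (-1/2)) ^ L')"
    by (intro suminf_nonneg summable_power_mult_geometric) auto
  then have "0 \<le> G" using \<open>0 \<le> C\<close> c_gt_one by (simp add: G_def)
  \<comment> \<open>a block type (L, m) whose list approximates v / a on the first w coordinates
      and whose index is large enough to make the tail small\<close>
  obtain j0 where j0: "\<And>L. L \<ge> j0 \<Longrightarrow> c powr (- (real L / 2)) * G \<le> \<delta>"
    using tail_factor_small[OF \<open>0 < \<delta>\<close> \<open>0 \<le> G\<close>] by blast
  have "\<exists>L\<ge>max j0 m. block_len L = w \<and> (\<forall>i<w. norm (a * block_list L ! i - v i) \<le> \<delta> / 2)"
    using block_list_approx_scaled[where \<epsilon> = "\<delta> / 2" and N = "max j0 m"] \<open>a \<noteq> 0\<close> \<open>0 < \<delta>\<close>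
    by (simp only: half_gt_zero_iff) blast
  then obtain L where "L \<ge> max j0 m" and len: "block_len L = w"
    and list: "\<And>i. i < w \<Longrightarrow> norm (a * block_list L ! i - v i) \<le> \<delta> / 2"
    by blast
  define \<eta> where "\<eta> = \<delta> / (2 * (C * real L + 1))"
  have "0 \<le> C * real L" using \<open>0 \<le> C\<close> by simp
  then have "0 < \<eta>" using \<open>0 < \<delta>\<close> by (simp add: \<eta>_def add_nonneg_pos)
  have "C * real L * \<eta> = \<delta> / 2 * (C * real L / (C * real L + 1))"
    by (simp add: \<eta>_def)
  also have "\<dots> \<le> \<delta> / 2"
    using \<open>0 \<le> C * real L\<close> \<open>0 < \<delta>\<close> by (intro mult_left_le) auto
  finally have "C * real L * \<eta> \<le> \<delta> / 2" .
  obtain N where N: "\<And>n i. block_start L m n \<Longrightarrow> N < n \<Longrightarrow> i < block_len L \<Longrightarrow> norm (generator (n + i)) \<le> \<eta>"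
    using norm_generator_small_on_late_blocks[OF \<open>0 < \<eta>\<close>] by blast
  have "A L m - {0..max (block_threshold L) N} \<subseteq> {n. (wshift lam ^^ n) (\<lambda>k. poly p (generator k)) \<in> U}"
  proof
    fix n assume n: "n \<in> A L m - {0..max (block_threshold L) N}"
    then have "block_threshold L < n" by auto
    then have b: "block_start L m n"
      using n \<open>1 \<le> m\<close> \<open>L \<ge> max j0 m\<close> by (simp add: block_start_def)
    have "C * real L * norm (generator (n + i)) \<le> \<delta> / 2" if "i < w" for i
      using N[OF b _ that[folded len]] n \<open>C * real L * \<eta> \<le> \<delta> / 2\<close> \<open>0 \<le> C * real L\<close>
        mult_left_mono[of _ \<eta> "C * real L"] by fastforce
    moreover have "c powr (- (real L / 2)) * G \<le> \<delta>" using j0 \<open>L \<ge> max j0 m\<close> by simp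
    ultimately have "head_tail_close w \<delta> (\<lambda>k. lam ^ n * poly p (generator (n + k))) v"
      by (intro shifted_poly_generator_head_tail_close[OF b len \<open>0 \<le> C\<close> p0 lowest list])
         (simp_all only: G_def ac_simps)
    moreover have "(\<lambda>k. lam ^ n * poly p (generator (n + k))) \<in> seq_carrier S"
      by (intro seq_carrier_if_summable_norm[OF adm] summable_norm_scaled_shift
          summable_norm_poly_generator p0)
    ultimately show "n \<in> {n. (wshift lam ^^ n) (\<lambda>k. poly p (generator k)) \<in> U}"
      using ball close by (simp add: funpow_wshift)
  qed
  moreover have "1 \<le> L" using \<open>L \<ge> max j0 m\<close> \<open>1 \<le> m\<close> by simp
  then have "A L m - {0..max (block_threshold L) N} \<in> F" by (rule A_beyond_in_F[OF _ \<open>1 \<le> m\<close>])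
  ultimately show ?thesis using fam unfolding furstenberg_family_def by blast
qed

definition generated_algebra :: "(nat \<Rightarrow> complex) set" where
  "generated_algebra = {(\<lambda>k. poly p (generator k)) | p. poly p 0 = 0}"

lemma seq_subalgebra_generated_algebra: "seq_subalgebra S generated_algebra"
  unfolding seq_subalgebra_def
proof (intro conjI ballI allI)
  show "generated_algebra \<subseteq> seq_carrier S"
    using seq_carrier_if_summable_norm[OF adm summable_norm_poly_generator]
    by (auto simp: generated_algebra_def)
  show "(\<lambda>k. 0) \<in> generated_algebra"
    unfolding generated_algebra_def by (intro CollectI exI[of _ 0]) simp
next
  fix x y assume "x \<in> generated_algebra" "y \<in> generated_algebra"
  then obtain p q where p: "poly p 0 = 0" "x = (\<lambda>k. poly p (generator k))"
    and q: "poly q 0 = 0" "y = (\<lambda>k. poly q (generator k))" by (auto simp: generated_algebra_def)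
  show "(\<lambda>k. x k + y k) \<in> generated_algebra" unfolding generated_algebra_def
    by (intro CollectI exI[of _ "p + q"]) (simp add: p q)
  show "(\<lambda>k. x k * y k) \<in> generated_algebra" unfolding generated_algebra_def
    by (intro CollectI exI[of _ "p * q"]) (simp add: p q)
next
  fix a :: complex and x assume "x \<in> generated_algebra"
  then obtain p where p: "poly p 0 = 0" "x = (\<lambda>k. poly p (generator k))"
    by (auto simp: generated_algebra_def)
  show "(\<lambda>k. a * x k) \<in> generated_algebra" unfolding generated_algebra_def
    by (intro CollectI exI[of _ "smult a p"]) (simp add: p)
qed

lemma generator_nonzero: "generator \<noteq> (\<lambda>k. 0)"
proof -
  obtain L where "L \<ge> 1" and len: "block_len L = 1" and "norm (block_list L ! 0 - 1) < 1"
    using block_list_approx[of 1 1 "[1]"] by auto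
  then have "block_list L ! 0 \<noteq> 0" by auto
  have "A L 1 - {0..block_threshold L} \<in> F" by (rule A_beyond_in_F[OF \<open>L \<ge> 1\<close>]) simp
  then have "A L 1 - {0..block_threshold L} \<noteq> {}" using fam by (auto simp: furstenberg_family_def)
  then obtain n where "n \<in> A L 1 - {0..block_threshold L}" by blast
  then have "block_start L 1 n" using \<open>L \<ge> 1\<close> by (simp add: block_start_def)
  then have "lam ^ n * generator (n + 0) ^ 1 \<noteq> 0"
    using generator_power[of L 1 n 0] len \<open>block_list L ! 0 \<noteq> 0\<close> by simp
  then show ?thesis by auto
qed

lemma hypercyclic_subalgebra_generated_algebra:
  "hypercyclic_subalgebra S F (wshift lam) generated_algebra"
  unfolding hypercyclic_subalgebra_def
proof (intro conjI ballI impI)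
  have "generator \<in> generated_algebra"
    unfolding generated_algebra_def by (intro CollectI exI[of _ "[:0, 1:]"]) simp
  then show "generated_algebra \<noteq> {\<lambda>k. 0}" using generator_nonzero by blast
next
  fix x assume "x \<in> generated_algebra" "x \<noteq> (\<lambda>k. 0)"
  then obtain p where p: "poly p 0 = 0" "x = (\<lambda>k. poly p (generator k))"
    by (auto simp: generated_algebra_def)
  with \<open>x \<noteq> (\<lambda>k. 0)\<close> have "p \<noteq> 0" by auto
  show "A_hypercyclic S F (wshift lam) x" unfolding A_hypercyclic_def
  proof (intro conjI allI impI)
    show "x \<in> seq_carrier S"
      using seq_subalgebra_generated_algebra \<open>x \<in> generated_algebra\<close> by (auto simp: seq_subalgebra_def)
    fix U assume "seq_open S U \<and> U \<noteq> {}"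
    then show "{n. (wshift lam ^^ n) x \<in> U} \<in> F"
      using poly_generator_returns[OF \<open>p \<noteq> 0\<close> p(1)] p(2) by blast
  qed
qed (rule seq_subalgebra_generated_algebra)

end

theorem theorem2p4:
  fixes S :: seqspace and F :: "nat set set" and lam :: complex
  assumes "admissible_space S"
    and "furstenberg_family F" and "finitely_invariant F"
    and "1 < norm lam"
  shows "(\<exists>B. seq_subalgebra S B \<and> B \<noteq> {\<lambda>k. 0} \<and>
            (\<forall>x\<in>B. x \<noteq> (\<lambda>k. 0) \<longrightarrow> A_hypercyclic S F (wshift lam) x))
     \<longleftrightarrow> (\<exists>A :: nat \<Rightarrow> nat \<Rightarrow> nat set.
            (\<forall>l m. 1 \<le> l \<and> 1 \<le> m \<longrightarrow> A l m \<in> F) \<and>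
            (\<forall>l m l' m'. 1 \<le> l \<and> 1 \<le> m \<and> 1 \<le> l' \<and> 1 \<le> m' \<and> (l, m) \<noteq> (l', m')
                \<longrightarrow> A l m \<inter> A l' m' = {}) \<and>
            (\<forall>l m l' m' n n'. 1 \<le> l \<and> 1 \<le> m \<and> 1 \<le> l' \<and> 1 \<le> m' \<and>
                n \<in> A l m \<and> n' \<in> A l' m' \<and> n < n' \<longrightarrow>
                n + l \<le> n' \<and> real n + real l + real l' \<le> real n' * real m / real m'))"
proof -
  have "(\<exists>B. hypercyclic_subalgebra S F (wshift lam) B) \<longleftrightarrow> (\<exists>A. separated_return_family F A)"
  proof
    assume "\<exists>B. hypercyclic_subalgebra S F (wshift lam) B"
    then show "\<exists>A. separated_return_family F A" using necessity assms by blast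
  next
    assume "\<exists>A. separated_return_family F A"
    then obtain A where "separated_return_family F A" ..
    then interpret separated_returns S F lam A
      using assms by unfold_locales
    show "\<exists>B. hypercyclic_subalgebra S F (wshift lam) B"
      using hypercyclic_subalgebra_generated_algebra by blast
  qed
  then show ?thesis
    unfolding hypercyclic_subalgebra_def separated_return_family_def .
qed

end
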